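(* Let $A$ be a ring, $\mathcal C$ a coseparable $A$-coring with cointegral $\delta$, and $e\in\mathcal C^A$. Let $\mathbb X^{\mathcal C}_{\delta,e}$ be the supplemented S-category described in the context. A right $\mathcal C$-comodule $M$ is formally $\mathbb X^{\mathcal C}_{\delta,e}$-smooth if and only if the map $$\kappa_M:M\to M,\qquad m\mapsto \sum m_{(0)}\,\delta(e\otimes_A m_{(1)})$$ has a left inverse in $\mathrm{End}_A(M)$ (the ring of right $A$-module endomorphisms of $M$).
   Context: An $A$-coring $\mathcal C$ has coproduct $\Delta_{\mathcal C}(c)=\sum c_{(1)}\otimes_A c_{(2)}$ and counit $\varepsilon_{\mathcal C}$; right comodules $M$ have coaction $\varrho^M(m)=\sum m_{(0)}\otimes_A m_{(1)}$; $\mathfrak M^{\mathcal C}$ is the category of right $\mathcal C$-comodules, $\mathfrak M_A$ that of right $A$-modules. $\mathcal C$ is coseparable with cointegral $\delta$ if $\delta:\mathcal C\otimes_A\mathcal C\to A$ is an $(A,A)$-bimodule map with $\delta\circ\Delta_{\mathcal C}=\varepsilon_{\mathcal C}$ and $(\mathcal C\otimes_A\delta)\circ(\Delta_{\mathcal C}\otimes_A\mathcal C)=(\delta\otimes_A\mathcal C)\circ(\mathcal C\otimes_A\Delta_{\mathcal C})$. $\mathcal C^A=\{c\in\mathcal C: ac=ca\ \forall a\in A\}$. General definitions: an S-category is a pair of functors $u^*:\mathfrak X\to\bar{\mathfrak X}$, $u_*:\bar{\mathfrak X}\to\mathfrak X$ with $u^*\dashv u_*$ and a chosen natural left inverse $\nu$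 of the unit $\eta$; it is supplemented by a functor $u_!:\bar{\mathfrak X}\to\mathfrak X$ and natural transformation $\bar\eta:\mathrm{Id}\to u^*u_!$; one sets $r_y=\nu_{u_!(y)}\circ u_*(\bar\eta_y):u_*(y)\to u_!(y)$. An object $x\in\mathfrak X$ is formally $\mathbb X$-smooth if $\mathfrak X(x,r_y):g\mapsto r_y\circ g$ is surjective for all $y\in\bar{\mathfrak X}$, and formally $\mathbb X$-cosmooth if $\mathfrak X(r_y,x):g\mapsto g\circ r_y$ is surjective for all $y$. $\mathbb X^{\mathcal C}_{\delta,e}$: $\mathfrak X=\mathfrak M^{\mathcal C}$, $\bar{\mathfrak X}=\mathfrak M_A$, $u^*$ the forgetful functor, $u_*=-\otimes_A\mathcal C$ (right adjoint to $u^*$), $\nu_M:M\otimes_A\mathcal C\to M$, $m\otimes_A c\mapsto\sum m_{(0)}\delta(m_{(1)}\otimes_A c)$, $u_!=-\otimes_A\mathcal C$, $\bar\eta_N:N\to N\otimes_A\mathcal C$, $n\mapsto n\otimes_A e$. Thus for $N\in\mathfrak M_A$, $r_N:N\otimes_A\mathcal C\to N\otimes_A\mathcal C$, $n\otimes_A c\mapsto\sum n\otimes_A e_{(1)}\delta(e_{(2)}\otimes_A c)$. So $M$ is formally smooth iff for every right $A$-module $N$, $\mathrm{Hom}^{\mathcal C}(M,N\otimes_A\mathcal C)\to\mathrm{Hom}^{\mathcal C}(M,N\otimes_A\mathcal C)$, $g\mapsto r_N\circ g$, is surjective. *)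

theory Defs
  imports "HOL-Algebra.Ring"
begin

text \<open>An additive abelian group (HOL-Algebra ring record, multiplication unused)
  together with a left and a right action of the ring A.  A right A-module only
  uses the right action.\<close>

record ('a, 'm) bimod = "'m ring" +
  lact :: "'a \<Rightarrow> 'm \<Rightarrow> 'm"
  ract :: "'m \<Rightarrow> 'a \<Rightarrow> 'm"

definition rmod :: "('a::ring_1, 'm) bimod \<Rightarrow> bool" where
  "rmod M \<longleftrightarrow> abelian_group M \<and>
     (\<forall>m\<in>carrier M. \<forall>a. ract M m a \<in> carrier M) \<and>
     (\<forall>m\<in>carrier M. \<forall>m'\<in>carrier M. \<forall>a. ract M (m \<oplus>\<^bsub>M\<^esub> m') a = ract M m a \<oplus>\<^bsub>M\<^esub> ract M m' a) \<and>
     (\<forall>m\<in>carrier M. \<forall>a b. ract M m (a + b) = ract M m a \<oplus>\<^bsub>M\<^esub> ract M m b) \<and>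
     (\<forall>m\<in>carrier M. \<forall>a b. ract M (ract M m a) b = ract M m (a * b)) \<and>
     (\<forall>m\<in>carrier M. ract M m 1 = m)"

definition lmod :: "('a::ring_1, 'm) bimod \<Rightarrow> bool" where
  "lmod M \<longleftrightarrow> abelian_group M \<and>
     (\<forall>m\<in>carrier M. \<forall>a. lact M a m \<in> carrier M) \<and>
     (\<forall>m\<in>carrier M. \<forall>m'\<in>carrier M. \<forall>a. lact M a (m \<oplus>\<^bsub>M\<^esub> m') = lact M a m \<oplus>\<^bsub>M\<^esub> lact M a m') \<and>
     (\<forall>m\<in>carrier M. \<forall>a b. lact M (a + b) m = lact M a m \<oplus>\<^bsub>M\<^esub> lact M b m) \<and>
     (\<forall>m\<in>carrier M. \<forall>a b. lact M a (lact M b m) = lact M (a * b) m) \<and>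
     (\<forall>m\<in>carrier M. lact M 1 m = m)"

definition bimodule :: "('a::ring_1, 'm) bimod \<Rightarrow> bool" where
  "bimodule M \<longleftrightarrow> rmod M \<and> lmod M \<and>
     (\<forall>m\<in>carrier M. \<forall>a b. ract M (lact M a m) b = lact M a (ract M m b))"

definition rhom :: "('a::ring_1, 'm) bimod \<Rightarrow> ('a, 'n) bimod \<Rightarrow> ('m \<Rightarrow> 'n) \<Rightarrow> bool" where
  "rhom M N f \<longleftrightarrow> f \<in> carrier M \<rightarrow> carrier N \<and>
     (\<forall>m\<in>carrier M. \<forall>m'\<in>carrier M. f (m \<oplus>\<^bsub>M\<^esub> m') = f m \<oplus>\<^bsub>N\<^esub> f m') \<and>
     (\<forall>m\<in>carrier M. \<forall>a. f (ract M m a) = ract N (f m) a)"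

definition bihom :: "('a::ring_1, 'm) bimod \<Rightarrow> ('a, 'n) bimod \<Rightarrow> ('m \<Rightarrow> 'n) \<Rightarrow> bool" where
  "bihom M N f \<longleftrightarrow> rhom M N f \<and> (\<forall>m\<in>carrier M. \<forall>a. f (lact M a m) = lact N a (f m))"

definition bihomA :: "('a::ring_1, 'm) bimod \<Rightarrow> ('m \<Rightarrow> 'a) \<Rightarrow> bool" where
  "bihomA M f \<longleftrightarrow>
     (\<forall>m\<in>carrier M. \<forall>m'\<in>carrier M. f (m \<oplus>\<^bsub>M\<^esub> m') = f m + f m') \<and>
     (\<forall>m\<in>carrier M. \<forall>a. f (lact M a m) = a * f m) \<and>
     (\<forall>m\<in>carrier M. \<forall>a. f (ract M m a) = f m * a)"

text \<open>Tensor product M \<otimes>_A N of (the right A-module structure of) M and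
  (the left A-module structure of) N, constructed as the free abelian group on
  carrier M \<times> carrier N (finitely supported integer-valued functions) modulo
  the subgroup generated by the bilinearity and A-balancedness relations.
  Elements are the cosets.\<close>

definition fgen :: "('a, 'm, 'x) bimod_scheme \<Rightarrow> ('a, 'n, 'y) bimod_scheme \<Rightarrow> ('m \<times> 'n \<Rightarrow> int) set" where
  "fgen M N = {f. finite {p. f p \<noteq> 0} \<and> {p. f p \<noteq> 0} \<subseteq> carrier M \<times> carrier N}"

definition dlt :: "'p \<Rightarrow> 'p \<Rightarrow> int" where
  "dlt p = (\<lambda>q. if q = p then 1 else 0)"

inductive_set trel :: "('a, 'm, 'x) bimod_scheme \<Rightarrow> ('a, 'n, 'y) bimod_scheme \<Rightarrow> ('m \<times> 'n \<Rightarrow> int) set"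
  for M N where
  zero: "(\<lambda>_. 0) \<in> trel M N"
| add: "f \<in> trel M N \<Longrightarrow> g \<in> trel M N \<Longrightarrow> (\<lambda>p. f p + g p) \<in> trel M N"
| neg: "f \<in> trel M N \<Longrightarrow> (\<lambda>p. - f p) \<in> trel M N"
| gen_l: "m \<in> carrier M \<Longrightarrow> m' \<in> carrier M \<Longrightarrow> n \<in> carrier N \<Longrightarrow>
     (\<lambda>p. dlt (m \<oplus>\<^bsub>M\<^esub> m', n) p - dlt (m, n) p - dlt (m', n) p) \<in> trel M N"
| gen_r: "m \<in> carrier M \<Longrightarrow> n \<in> carrier N \<Longrightarrow> n' \<in> carrier N \<Longrightarrow>
     (\<lambda>p. dlt (m, n \<oplus>\<^bsub>N\<^esub> n') p - dlt (m, n) p - dlt (m, n') p) \<in> trel M N"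
| gen_bal: "m \<in> carrier M \<Longrightarrow> n \<in> carrier N \<Longrightarrow>
     (\<lambda>p. dlt (ract M m a, n) p - dlt (m, lact N a n) p) \<in> trel M N"

definition tcls :: "('a, 'm, 'x) bimod_scheme \<Rightarrow> ('a, 'n, 'y) bimod_scheme \<Rightarrow> ('m \<times> 'n \<Rightarrow> int) \<Rightarrow> ('m \<times> 'n \<Rightarrow> int) set" where
  "tcls M N f = {g \<in> fgen M N. (\<lambda>p. g p - f p) \<in> trel M N}"

definition rep :: "('p \<Rightarrow> int) set \<Rightarrow> ('p \<Rightarrow> int)" where
  "rep X = (SOME f. f \<in> X)"

definition fext :: "('p \<Rightarrow> 'q) \<Rightarrow> ('p \<Rightarrow> int) \<Rightarrow> ('q \<Rightarrow> int)" where
  "fext \<phi> f = (\<lambda>q. \<Sum>p\<in>{p. f p \<noteq> 0 \<and> \<phi> p = q}. f p)"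

definition tensor :: "('a, 'm, 'x) bimod_scheme \<Rightarrow> ('a, 'n, 'y) bimod_scheme \<Rightarrow> ('a, ('m \<times> 'n \<Rightarrow> int) set) bimod" where
  "tensor M N = \<lparr> carrier = tcls M N ` fgen M N,
      monoid.mult = (\<lambda>X Y. tcls M N (\<lambda>_. 0)),
      one = tcls M N (\<lambda>_. 0),
      zero = tcls M N (\<lambda>_. 0),
      add = (\<lambda>X Y. tcls M N (\<lambda>p. rep X p + rep Y p)),
      lact = (\<lambda>a X. tcls M N (fext (\<lambda>(m, n). (lact M a m, n)) (rep X))),
      ract = (\<lambda>X a. tcls M N (fext (\<lambda>(m, n). (m, ract N n a)) (rep X))) \<rparr>"

definition tmk :: "('a, 'm, 'x) bimod_scheme \<Rightarrow> ('a, 'n, 'y) bimod_scheme \<Rightarrow> 'm \<Rightarrow> 'n \<Rightarrow> ('m \<times> 'n \<Rightarrow> int) set" where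
  "tmk M N m n = tcls M N (dlt (m, n))"

definition tmap :: "('a, 'm', 'x) bimod_scheme \<Rightarrow> ('a, 'n', 'y) bimod_scheme \<Rightarrow> ('m \<Rightarrow> 'm') \<Rightarrow> ('n \<Rightarrow> 'n')
    \<Rightarrow> ('m \<times> 'n \<Rightarrow> int) set \<Rightarrow> ('m' \<times> 'n' \<Rightarrow> int) set" where
  "tmap M' N' \<phi> \<psi> X = tcls M' N' (fext (\<lambda>(m, n). (\<phi> m, \<psi> n)) (rep X))"

text \<open>The additive map M \<otimes>_A N \<rightarrow> T induced by a (balanced, biadditive)
  map \<beta> : M \<times> N \<rightarrow> T: \<Sum> m \<otimes> n \<mapsto> \<Sum> \<beta> m n.\<close>
definition tlift :: "('t, 'z) ring_scheme \<Rightarrow> ('m \<Rightarrow> 'n \<Rightarrow> 't) \<Rightarrow> ('m \<times> 'n \<Rightarrow> int) set \<Rightarrow> 't" where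
  "tlift T \<beta> X = (\<Oplus>\<^bsub>T\<^esub> p\<in>{p. rep X p \<noteq> 0}. add_pow T (rep X p) (\<beta> (fst p) (snd p)))"

definition tassoc :: "('a, 'm, 'x) bimod_scheme \<Rightarrow> ('a, 'n, 'y) bimod_scheme \<Rightarrow> ('a, 'p, 'w) bimod_scheme
    \<Rightarrow> ((('m \<times> 'n \<Rightarrow> int) set) \<times> 'p \<Rightarrow> int) set \<Rightarrow> ('m \<times> ('n \<times> 'p \<Rightarrow> int) set \<Rightarrow> int) set" where
  "tassoc M N P X = tlift (tensor M (tensor N P))
     (\<lambda>x p. tlift (tensor M (tensor N P)) (\<lambda>m n. tmk M (tensor N P) m (tmk N P n p)) x) X"

definition coring :: "('a::ring_1, 'c) bimod \<Rightarrow> ('c \<Rightarrow> ('c \<times> 'c \<Rightarrow> int) set) \<Rightarrow> ('c \<Rightarrow> 'a) \<Rightarrow> bool" where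
  "coring C \<Delta> \<epsilon> \<longleftrightarrow> bimodule C \<and>
     bihom C (tensor C C) \<Delta> \<and> bihomA C \<epsilon> \<and>
     (\<forall>c\<in>carrier C. tassoc C C C (tmap (tensor C C) C \<Delta> id (\<Delta> c)) = tmap C (tensor C C) id \<Delta> (\<Delta> c)) \<and>
     (\<forall>c\<in>carrier C. tlift C (\<lambda>x y. lact C (\<epsilon> x) y) (\<Delta> c) = c) \<and>
     (\<forall>c\<in>carrier C. tlift C (\<lambda>x y. ract C x (\<epsilon> y)) (\<Delta> c) = c)"

definition coseparable :: "('a::ring_1, 'c) bimod \<Rightarrow> ('c \<Rightarrow> ('c \<times> 'c \<Rightarrow> int) set) \<Rightarrow> ('c \<Rightarrow> 'a)
    \<Rightarrow> (('c \<times> 'c \<Rightarrow> int) set \<Rightarrow> 'a) \<Rightarrow> bool" where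
  "coseparable C \<Delta> \<epsilon> \<delta> \<longleftrightarrow> coring C \<Delta> \<epsilon> \<and>
     bihomA (tensor C C) \<delta> \<and>
     (\<forall>c\<in>carrier C. \<delta> (\<Delta> c) = \<epsilon> c) \<and>
     (\<forall>c\<in>carrier C. \<forall>c'\<in>carrier C.
        tlift C (\<lambda>x y. ract C x (\<delta> (tmk C C y c'))) (\<Delta> c)
      = tlift C (\<lambda>x y. lact C (\<delta> (tmk C C c x)) y) (\<Delta> c'))"

definition coinv :: "('a::ring_1, 'c) bimod \<Rightarrow> 'c set" where
  "coinv C = {c \<in> carrier C. \<forall>a. lact C a c = ract C c a}"

definition comodule :: "('a::ring_1, 'c) bimod \<Rightarrow> ('c \<Rightarrow> ('c \<times> 'c \<Rightarrow> int) set) \<Rightarrow> ('c \<Rightarrow> 'a)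
    \<Rightarrow> ('a, 'm) bimod \<Rightarrow> ('m \<Rightarrow> ('m \<times> 'c \<Rightarrow> int) set) \<Rightarrow> bool" where
  "comodule C \<Delta> \<epsilon> M \<rho> \<longleftrightarrow> rmod M \<and> rhom M (tensor M C) \<rho> \<and>
     (\<forall>m\<in>carrier M. tlift M (\<lambda>x c. ract M x (\<epsilon> c)) (\<rho> m) = m) \<and>
     (\<forall>m\<in>carrier M. tassoc M C C (tmap (tensor M C) C \<rho> id (\<rho> m)) = tmap M (tensor C C) id \<Delta> (\<rho> m))"

text \<open>Right C-comodule maps g : M \<rightarrow> N \<otimes>_A C, where N \<otimes>_A C carries
  the coaction N \<otimes>_A \<Delta> (compared in N \<otimes> (C \<otimes> C) via the
  associativity isomorphism).\<close>
definition comod_map_to :: "('a::ring_1, 'c) bimod \<Rightarrow> ('c \<Rightarrow> ('c \<times> 'c \<Rightarrow> int) set)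
    \<Rightarrow> ('a, 'm) bimod \<Rightarrow> ('m \<Rightarrow> ('m \<times> 'c \<Rightarrow> int) set) \<Rightarrow> ('a, 'n) bimod
    \<Rightarrow> ('m \<Rightarrow> ('n \<times> 'c \<Rightarrow> int) set) \<Rightarrow> bool" where
  "comod_map_to C \<Delta> M \<rho> N g \<longleftrightarrow> rhom M (tensor N C) g \<and>
     (\<forall>m\<in>carrier M. tmap N (tensor C C) id \<Delta> (g m) = tassoc N C C (tmap (tensor N C) C g id (\<rho> m)))"

text \<open>The map r_N : N \<otimes>_A C \<rightarrow> N \<otimes>_A C,
  n \<otimes> c \<mapsto> \<Sum> n \<otimes> e_(1) \<delta>(e_(2) \<otimes> c), of the supplemented S-category
  \<X>^C_{\<delta>,e}.\<close>
definition rmap :: "('a::ring_1, 'c) bimod \<Rightarrow> ('c \<Rightarrow> ('c \<times> 'c \<Rightarrow> int) set)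
    \<Rightarrow> (('c \<times> 'c \<Rightarrow> int) set \<Rightarrow> 'a) \<Rightarrow> 'c \<Rightarrow> ('a, 'n) bimod
    \<Rightarrow> ('n \<times> 'c \<Rightarrow> int) set \<Rightarrow> ('n \<times> 'c \<Rightarrow> int) set" where
  "rmap C \<Delta> \<delta> e N X = tlift (tensor N C)
     (\<lambda>n c. tmk N C n (tlift C (\<lambda>x y. ract C x (\<delta> (tmk C C y c))) (\<Delta> e))) X"

text \<open>Formal \<X>^C_{\<delta>,e}-smoothness of the comodule (M,\<rho>), with the test
  modules N ranging over right A-modules whose underlying type is 'n.\<close>
definition formally_smooth :: "'n itself \<Rightarrow> ('a::ring_1, 'c) bimod \<Rightarrow> ('c \<Rightarrow> ('c \<times> 'c \<Rightarrow> int) set)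
    \<Rightarrow> (('c \<times> 'c \<Rightarrow> int) set \<Rightarrow> 'a) \<Rightarrow> 'c \<Rightarrow> ('a, 'm) bimod \<Rightarrow> ('m \<Rightarrow> ('m \<times> 'c \<Rightarrow> int) set) \<Rightarrow> bool" where
  "formally_smooth _ C \<Delta> \<delta> e M \<rho> \<longleftrightarrow>
     (\<forall>N :: ('a, 'n) bimod. rmod N \<longrightarrow>
        (\<forall>h. comod_map_to C \<Delta> M \<rho> N h \<longrightarrow>
           (\<exists>g. comod_map_to C \<Delta> M \<rho> N g \<and> (\<forall>m\<in>carrier M. rmap C \<Delta> \<delta> e N (g m) = h m))))"

definition kappa :: "('a::ring_1, 'c) bimod \<Rightarrow> (('c \<times> 'c \<Rightarrow> int) set \<Rightarrow> 'a) \<Rightarrow> 'c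
    \<Rightarrow> ('a, 'm) bimod \<Rightarrow> ('m \<Rightarrow> ('m \<times> 'c \<Rightarrow> int) set) \<Rightarrow> 'm \<Rightarrow> 'm" where
  "kappa C \<delta> e M \<rho> m = tlift M (\<lambda>x c. ract M x (\<delta> (tmk C C e c))) (\<rho> m)"

end

theory Submission
  imports Defs
begin

text \<open>
  Write \<open>\<kappa>\<^sub>M = (M \<otimes> \<delta>(e \<otimes> -)) \<circ> \<rho>\<close> and
  \<open>r\<^sub>N = N \<otimes> rcomp\<close> with \<open>rcomp c = \<Sum> e\<^sub>1 \<delta>(e\<^sub>2 \<otimes> c)\<close>.  The proof rests on three facts:
  (1) comodule maps \<open>g : M \<rightarrow> N \<otimes> C\<close> are exactly the maps \<open>(f \<otimes> C) \<circ> \<rho>\<close> with f right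
      A-linear, and \<open>f = (N \<otimes> \<epsilon>) \<circ> g\<close> (cofreeness of \<open>N \<otimes> C\<close>);
  (2) \<open>(N \<otimes> \<epsilon>) \<circ> r\<^sub>N = N \<otimes> \<delta>(e \<otimes> -)\<close>, because \<open>\<epsilon>(rcomp c) = \<delta>(e \<otimes> c)\<close>;
  (3) \<open>r\<^sub>N \<circ> (f \<otimes> C) \<circ> \<rho> = ((f \<circ> \<kappa>\<^sub>M) \<otimes> C) \<circ> \<rho>\<close>, by the cointegral identity and
      coassociativity of \<open>\<rho>\<close>.
  If M is formally smooth, lifting \<open>\<rho>\<close> through \<open>r\<^sub>M\<close> and applying (1), (2) yields a left
  inverse of \<open>\<kappa>\<^sub>M\<close>; conversely a left inverse \<open>\<phi>\<close> lifts h with counit part f to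
  \<open>((f \<circ> \<phi>) \<otimes> C) \<circ> \<rho>\<close> by (1) and (3).
\<close>

lemma add_pow_int0[simp]: "[(0::int)] \<cdot>\<^bsub>T\<^esub> x = \<zero>\<^bsub>T\<^esub>"
  by (simp add: add_pow_def)

lemma ag_cancel3:
  assumes "abelian_group T" "x \<in> carrier T" "y \<in> carrier T"
  shows "(x \<oplus>\<^bsub>T\<^esub> y) \<ominus>\<^bsub>T\<^esub> x \<ominus>\<^bsub>T\<^esub> y = \<zero>\<^bsub>T\<^esub>"
proof -
  interpret abelian_group T by fact
  have "(x \<oplus>\<^bsub>T\<^esub> y) \<ominus>\<^bsub>T\<^esub> x \<ominus>\<^bsub>T\<^esub> y = (x \<oplus>\<^bsub>T\<^esub> y) \<oplus>\<^bsub>T\<^esub> (\<ominus>\<^bsub>T\<^esub> x \<oplus>\<^bsub>T\<^esub> \<ominus>\<^bsub>T\<^esub> y)"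
    using assms by (simp add: a_minus_def a_assoc)
  also have "\<dots> = (x \<oplus>\<^bsub>T\<^esub> y) \<oplus>\<^bsub>T\<^esub> \<ominus>\<^bsub>T\<^esub> (x \<oplus>\<^bsub>T\<^esub> y)"
    using assms by (simp add: minus_add a_comm)
  also have "\<dots> = \<zero>\<^bsub>T\<^esub>" using assms by (simp add: r_neg)
  finally show ?thesis .
qed

lemma ag_minus_self:
  assumes "abelian_group T" "x \<in> carrier T"
  shows "x \<ominus>\<^bsub>T\<^esub> x = \<zero>\<^bsub>T\<^esub>"
proof -
  interpret abelian_group T by fact
  show ?thesis using assms by (simp add: a_minus_def r_neg)
qed

lemma ag_minus_zero_eq:
  assumes "abelian_group T" "x \<in> carrier T" "y \<in> carrier T" "x \<ominus>\<^bsub>T\<^esub> y = \<zero>\<^bsub>T\<^esub>"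
  shows "x = y"
proof -
  interpret abelian_group T by fact
  have "(x \<ominus>\<^bsub>T\<^esub> y) \<oplus>\<^bsub>T\<^esub> y = x" using assms(2,3) by (simp add: a_minus_def a_assoc l_neg)
  then show ?thesis using assms by simp
qed

definition addhom :: "('g, 'u) ring_scheme \<Rightarrow> ('h, 'v) ring_scheme \<Rightarrow> ('g \<Rightarrow> 'h) \<Rightarrow> bool" where
  "addhom G H F \<longleftrightarrow> (\<forall>x\<in>carrier G. F x \<in> carrier H) \<and>
     (\<forall>x\<in>carrier G. \<forall>y\<in>carrier G. F (x \<oplus>\<^bsub>G\<^esub> y) = F x \<oplus>\<^bsub>H\<^esub> F y)"

lemma addhomI:
  assumes "\<And>x. x \<in> carrier G \<Longrightarrow> F x \<in> carrier H"
    "\<And>x y. x \<in> carrier G \<Longrightarrow> y \<in> carrier G \<Longrightarrow> F (x \<oplus>\<^bsub>G\<^esub> y) = F x \<oplus>\<^bsub>H\<^esub> F y"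
  shows "addhom G H F"
  using assms by (simp add: addhom_def)

lemma addhomD:
  assumes "addhom G H F"
  shows "\<And>x. x \<in> carrier G \<Longrightarrow> F x \<in> carrier H"
    "\<And>x y. x \<in> carrier G \<Longrightarrow> y \<in> carrier G \<Longrightarrow> F (x \<oplus>\<^bsub>G\<^esub> y) = F x \<oplus>\<^bsub>H\<^esub> F y"
  using assms by (auto simp: addhom_def)

lemma addhom_comp:
  "addhom G H F \<Longrightarrow> addhom H K F' \<Longrightarrow> addhom G K (\<lambda>x. F' (F x))"
  by (simp add: addhom_def)

lemma addhom_add:
  assumes H: "abelian_group H" and F: "addhom G H F1" and G: "addhom G H F2"
  shows "addhom G H (\<lambda>x. F1 x \<oplus>\<^bsub>H\<^esub> F2 x)"
proof (rule addhomI)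
  interpret abelian_group H by fact
  fix x assume x: "x \<in> carrier G"
  show "F1 x \<oplus>\<^bsub>H\<^esub> F2 x \<in> carrier H" using addhomD(1)[OF F x] addhomD(1)[OF G x] by simp
  fix y assume y: "y \<in> carrier G"
  show "F1 (x \<oplus>\<^bsub>G\<^esub> y) \<oplus>\<^bsub>H\<^esub> F2 (x \<oplus>\<^bsub>G\<^esub> y) = (F1 x \<oplus>\<^bsub>H\<^esub> F2 x) \<oplus>\<^bsub>H\<^esub> (F1 y \<oplus>\<^bsub>H\<^esub> F2 y)"
    using addhomD[OF F] addhomD[OF G] x y by (simp add: a_ac)
qed

lemma addhom_pow:
  assumes G: "abelian_group G" and H: "abelian_group H" and F: "addhom G H F" and x: "x \<in> carrier G"
  shows "F ([(k::int)] \<cdot>\<^bsub>G\<^esub> x) = [k] \<cdot>\<^bsub>H\<^esub> F x"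
proof -
  have h: "F \<in> hom (add_monoid G) (add_monoid H)"
    using F by (auto simp: hom_def addhom_def)
  have "F (pow (add_monoid G) x k) = pow (add_monoid H) (F x) k"
    by (rule hom_int_pow[OF h]) (use x abelian_group.a_group[OF G] abelian_group.a_group[OF H] in auto)
  then show ?thesis by (simp add: add_pow_def)
qed

lemma addhom_zero:
  assumes G: "abelian_group G" and H: "abelian_group H" and F: "addhom G H F"
  shows "F \<zero>\<^bsub>G\<^esub> = \<zero>\<^bsub>H\<^esub>"
proof -
  have "F ([(0::int)] \<cdot>\<^bsub>G\<^esub> \<zero>\<^bsub>G\<^esub>) = [(0::int)] \<cdot>\<^bsub>H\<^esub> F \<zero>\<^bsub>G\<^esub>"
    by (rule addhom_pow[OF G H F]) (simp add: abelian_group.axioms(1)[OF G] abelian_monoid.zero_closed)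
  then show ?thesis by simp
qed

lemma addhom_finsum:
  assumes G: "abelian_group G" and H: "abelian_group H" and F: "addhom G H F"
    and I: "finite I" and f: "f \<in> I \<rightarrow> carrier G"
  shows "F (finsum G f I) = finsum H (\<lambda>i. F (f i)) I"
  using I f
proof (induction I rule: finite_induct)
  interpret G: abelian_group G by fact
  interpret H: abelian_group H by fact
  { case empty show ?case using addhom_zero[OF G H F] by simp }
  { case (insert x I)
    have fx: "f x \<in> carrier G" and fI: "f \<in> I \<rightarrow> carrier G" using insert.prems by auto
    have "F (finsum G f (insert x I)) = F (f x \<oplus>\<^bsub>G\<^esub> finsum G f I)"
      using insert.hyps fx fI by (simp add: G.finsum_insert)
    also have "\<dots> = F (f x) \<oplus>\<^bsub>H\<^esub> finsum H (\<lambda>i. F (f i)) I"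
      using addhomD(2)[OF F fx G.finsum_closed[OF fI]] insert.IH[OF fI] by simp
    also have "\<dots> = finsum H (\<lambda>i. F (f i)) (insert x I)"
      using insert.hyps fx fI addhomD(1)[OF F] by (subst H.finsum_insert) auto
    finally show ?case . }
qed

definition scalars :: "('a::ring_1) ring" where
  "scalars = \<lparr>carrier = UNIV, mult = (*), one = 1, zero = 0, add = (+)\<rparr>"

lemma scalars_simps[simp]: "carrier scalars = UNIV" "add scalars = (+)" "zero scalars = 0"
  by (simp_all add: scalars_def)

lemma scalars_abelian: "abelian_group (scalars :: ('a::ring_1) ring)"
proof (rule abelian_groupI)
  fix x :: 'a have "- x + x = 0" by simp
  then show "\<exists>y\<in>carrier scalars. y \<oplus>\<^bsub>scalars\<^esub> x = \<zero>\<^bsub>scalars\<^esub>" by (simp only: scalars_simps) blast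
qed (auto simp: algebra_simps)

lemma rmodD:
  assumes "rmod M"
  shows "abelian_group M" "\<And>m a. m \<in> carrier M \<Longrightarrow> ract M m a \<in> carrier M"
    "\<And>m m' a. m \<in> carrier M \<Longrightarrow> m' \<in> carrier M \<Longrightarrow> ract M (m \<oplus>\<^bsub>M\<^esub> m') a = ract M m a \<oplus>\<^bsub>M\<^esub> ract M m' a"
    "\<And>m a b. m \<in> carrier M \<Longrightarrow> ract M m (a + b) = ract M m a \<oplus>\<^bsub>M\<^esub> ract M m b"
    "\<And>m a b. m \<in> carrier M \<Longrightarrow> ract M (ract M m a) b = ract M m (a * b)"
    "\<And>m. m \<in> carrier M \<Longrightarrow> ract M m 1 = m"
  using assms unfolding rmod_def by blast+

lemma lmodD:
  assumes "lmod M"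
  shows "abelian_group M" "\<And>m a. m \<in> carrier M \<Longrightarrow> lact M a m \<in> carrier M"
    "\<And>m m' a. m \<in> carrier M \<Longrightarrow> m' \<in> carrier M \<Longrightarrow> lact M a (m \<oplus>\<^bsub>M\<^esub> m') = lact M a m \<oplus>\<^bsub>M\<^esub> lact M a m'"
    "\<And>m a b. m \<in> carrier M \<Longrightarrow> lact M (a + b) m = lact M a m \<oplus>\<^bsub>M\<^esub> lact M b m"
    "\<And>m a b. m \<in> carrier M \<Longrightarrow> lact M a (lact M b m) = lact M (a * b) m"
    "\<And>m. m \<in> carrier M \<Longrightarrow> lact M 1 m = m"
  using assms unfolding lmod_def by blast+

lemma bihomAD:
  assumes "bihomA M f"
  shows "\<And>m m'. m \<in> carrier M \<Longrightarrow> m' \<in> carrier M \<Longrightarrow> f (m \<oplus>\<^bsub>M\<^esub> m') = f m + f m'"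
    "\<And>m a. m \<in> carrier M \<Longrightarrow> f (lact M a m) = a * f m"
    "\<And>m a. m \<in> carrier M \<Longrightarrow> f (ract M m a) = f m * a"
  using assms unfolding bihomA_def by blast+

lemma rhomD:
  assumes "rhom M N f"
  shows "\<And>m. m \<in> carrier M \<Longrightarrow> f m \<in> carrier N"
    "\<And>m m'. m \<in> carrier M \<Longrightarrow> m' \<in> carrier M \<Longrightarrow> f (m \<oplus>\<^bsub>M\<^esub> m') = f m \<oplus>\<^bsub>N\<^esub> f m'"
    "\<And>m a. m \<in> carrier M \<Longrightarrow> f (ract M m a) = ract N (f m) a"
  using assms unfolding rhom_def by blast+

lemma rhomI:
  assumes "\<And>m. m \<in> carrier M \<Longrightarrow> f m \<in> carrier N"
    "\<And>m m'. m \<in> carrier M \<Longrightarrow> m' \<in> carrier M \<Longrightarrow> f (m \<oplus>\<^bsub>M\<^esub> m') = f m \<oplus>\<^bsub>N\<^esub> f m'"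
    "\<And>m a. m \<in> carrier M \<Longrightarrow> f (ract M m a) = ract N (f m) a"
  shows "rhom M N f"
  using assms unfolding rhom_def by blast

lemma rhom_comp:
  assumes f: "rhom M N f" and g: "rhom N P g"
  shows "rhom M P (\<lambda>x. g (f x))"
  using rhomD[OF f] rhomD[OF g] by (intro rhomI) auto

lemma rhom_addhom: "rhom M N f \<Longrightarrow> addhom M N f"
  by (auto simp: rhom_def addhom_def)

section \<open>The tensor product as an abelian group\<close>

text \<open>The tensor product \<open>M \<otimes>\<^sub>A N\<close> is built from finitely supported integer combinations of
  pairs; \<open>tensorable M N\<close> records what this needs: M a right and N a left A-module
  (at least the closure of the actions).\<close>

definition tensorable :: "('a::ring_1,'m,'x) bimod_scheme \<Rightarrow> ('a,'n,'y) bimod_scheme \<Rightarrow> bool" where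
  "tensorable M N \<longleftrightarrow> abelian_group M \<and> abelian_group N \<and>
     (\<forall>m\<in>carrier M. \<forall>a. ract M m a \<in> carrier M) \<and> (\<forall>n\<in>carrier N. \<forall>a. lact N a n \<in> carrier N)"

lemma fgen_iff: "f \<in> fgen M N \<longleftrightarrow> finite {p. f p \<noteq> 0} \<and> {p. f p \<noteq> 0} \<subseteq> carrier M \<times> carrier N"
  by (simp add: fgen_def)

lemma fgen_zero[simp]: "(\<lambda>_. 0) \<in> fgen M N"
  by (simp add: fgen_def)

lemma fgen_add: "f \<in> fgen M N \<Longrightarrow> g \<in> fgen M N \<Longrightarrow> (\<lambda>p. f p + g p) \<in> fgen M N"
proof -
  assume a: "f \<in> fgen M N" "g \<in> fgen M N"
  have s: "{p. f p + g p \<noteq> 0} \<subseteq> {p. f p \<noteq> 0} \<union> {p. g p \<noteq> 0}" by auto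
  show ?thesis using a s unfolding fgen_def by (auto intro: finite_subset)
qed

lemma fgen_scale: "f \<in> fgen M N \<Longrightarrow> (\<lambda>p. k * f p) \<in> fgen M N"
proof -
  assume a: "f \<in> fgen M N"
  have s: "{p. k * f p \<noteq> 0} \<subseteq> {p. f p \<noteq> 0}" by auto
  show ?thesis using a s unfolding fgen_def by (auto intro: finite_subset)
qed

lemma fgen_neg: "f \<in> fgen M N \<Longrightarrow> (\<lambda>p. - f p) \<in> fgen M N"
  using fgen_scale[of f M N "-1"] by simp

lemma fgen_diff: "f \<in> fgen M N \<Longrightarrow> g \<in> fgen M N \<Longrightarrow> (\<lambda>p. f p - g p) \<in> fgen M N"
  using fgen_add[OF _ fgen_neg, of f M N g] by simp

lemma fgen_dlt: "p \<in> carrier M \<times> carrier N \<Longrightarrow> dlt p \<in> fgen M N"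
proof -
  assume "p \<in> carrier M \<times> carrier N"
  moreover have "{q. dlt p q \<noteq> 0} = {p}" by (auto simp: dlt_def)
  ultimately show ?thesis by (simp add: fgen_def)
qed

lemma fgen_sum: "finite I \<Longrightarrow> (\<And>i. i \<in> I \<Longrightarrow> F i \<in> fgen M N) \<Longrightarrow> (\<lambda>p. \<Sum>i\<in>I. F i p) \<in> fgen M N"
proof (induction I rule: finite_induct)
  case empty then show ?case by simp
next
  case (insert x F') then show ?case by (simp add: fgen_add)
qed

lemma trel_fgen:
  assumes ok: "tensorable M N" and f: "f \<in> trel M N"
  shows "f \<in> fgen M N"
  using f
proof (induction rule: trel.induct)
  case zero then show ?case by simp
next
  case (add f g) then show ?case by (intro fgen_add)
next
  case (neg f) show ?case using neg.IH by (rule fgen_neg)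
next
  case (gen_l m m' n)
  have "m \<oplus>\<^bsub>M\<^esub> m' \<in> carrier M" using ok gen_l unfolding tensorable_def
    by (meson abelian_groupE(1))
  then show ?case using gen_l by (intro fgen_diff fgen_dlt) auto
next
  case (gen_r m n n')
  have "n \<oplus>\<^bsub>N\<^esub> n' \<in> carrier N" using ok gen_r unfolding tensorable_def
    by (meson abelian_groupE(1))
  then show ?case using gen_r by (intro fgen_diff fgen_dlt) auto
next
  case (gen_bal m n a)
  then show ?case using ok unfolding tensorable_def by (intro fgen_diff fgen_dlt) auto
qed

lemma trel_diff: "f \<in> trel M N \<Longrightarrow> g \<in> trel M N \<Longrightarrow> (\<lambda>p. f p - g p) \<in> trel M N"
  using trel.add[OF _ trel.neg, of f M N g] by simp

lemma tcls_self: "f \<in> fgen M N \<Longrightarrow> f \<in> tcls M N f"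
  using trel.zero[of M N] by (simp add: tcls_def)

lemma tcls_eq_iff:
  assumes f: "f \<in> fgen M N" and g: "g \<in> fgen M N"
  shows "tcls M N f = tcls M N g \<longleftrightarrow> (\<lambda>p. f p - g p) \<in> trel M N"
proof
  assume "tcls M N f = tcls M N g"
  then have "f \<in> tcls M N g" using tcls_self[OF f] by simp
  then show "(\<lambda>p. f p - g p) \<in> trel M N" by (simp add: tcls_def)
next
  assume fg: "(\<lambda>p. f p - g p) \<in> trel M N"
  show "tcls M N f = tcls M N g"
  proof (rule Set.set_eqI)
    fix h
    have e1: "(\<lambda>p. h p - g p) = (\<lambda>p. (h p - f p) + (f p - g p))" by auto
    have e2: "(\<lambda>p. h p - f p) = (\<lambda>p. (h p - g p) - (f p - g p))" by auto
    have a1: "(\<lambda>p. h p - f p) \<in> trel M N \<Longrightarrow> (\<lambda>p. h p - g p) \<in> trel M N"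
    proof -
      assume "(\<lambda>p. h p - f p) \<in> trel M N"
      from trel.add[OF this fg] show ?thesis unfolding e1 .
    qed
    have a2: "(\<lambda>p. h p - g p) \<in> trel M N \<Longrightarrow> (\<lambda>p. h p - f p) \<in> trel M N"
    proof -
      assume "(\<lambda>p. h p - g p) \<in> trel M N"
      from trel_diff[OF this fg] show ?thesis unfolding e2 .
    qed
    show "h \<in> tcls M N f \<longleftrightarrow> h \<in> tcls M N g"
      unfolding tcls_def using a1 a2 by blast
  qed
qed

lemma rep_tcls:
  assumes f: "f \<in> fgen M N"
  shows "rep (tcls M N f) \<in> fgen M N" "(\<lambda>p. rep (tcls M N f) p - f p) \<in> trel M N"
    "tcls M N (rep (tcls M N f)) = tcls M N f"
proof -
  have "rep (tcls M N f) \<in> tcls M N f" unfolding rep_def using tcls_self[OF f] some_in_eq by fast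
  then show r1: "rep (tcls M N f) \<in> fgen M N" and r2: "(\<lambda>p. rep (tcls M N f) p - f p) \<in> trel M N"
    by (auto simp: tcls_def)
  show "tcls M N (rep (tcls M N f)) = tcls M N f" using tcls_eq_iff[OF r1 f] r2 by simp
qed

lemma tensor_carrier: "X \<in> carrier (tensor M N) \<longleftrightarrow> (\<exists>f\<in>fgen M N. X = tcls M N f)"
  by (auto simp: tensor_def)

lemma tcls_carrier[intro, simp]: "f \<in> fgen M N \<Longrightarrow> tcls M N f \<in> carrier (tensor M N)"
  by (auto simp: tensor_carrier)

lemma rep_fgen: "X \<in> carrier (tensor M N) \<Longrightarrow> rep X \<in> fgen M N"
  by (auto simp: tensor_carrier rep_tcls)

lemma tensor_add_tcls:
  assumes f: "f \<in> fgen M N" and g: "g \<in> fgen M N"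
  shows "tcls M N f \<oplus>\<^bsub>tensor M N\<^esub> tcls M N g = tcls M N (\<lambda>p. f p + g p)"
proof -
  let ?r = "rep (tcls M N f)" and ?s = "rep (tcls M N g)"
  have "tcls M N f \<oplus>\<^bsub>tensor M N\<^esub> tcls M N g = tcls M N (\<lambda>p. ?r p + ?s p)"
    by (simp add: tensor_def)
  also have "\<dots> = tcls M N (\<lambda>p. f p + g p)"
  proof -
    have r: "(\<lambda>p. ?r p + ?s p) \<in> fgen M N" using rep_tcls f g by (intro fgen_add) auto
    have s: "(\<lambda>p. f p + g p) \<in> fgen M N" using f g by (intro fgen_add)
    have e: "(\<lambda>p. ?r p + ?s p - (f p + g p)) = (\<lambda>p. (?r p - f p) + (?s p - g p))" by auto
    have "(\<lambda>p. ?r p + ?s p - (f p + g p)) \<in> trel M N"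
      unfolding e using rep_tcls(2)[OF f] rep_tcls(2)[OF g] by (rule trel.add)
    then show ?thesis using tcls_eq_iff[OF r s] by simp
  qed
  finally show ?thesis .
qed

lemma tensor_zero: "\<zero>\<^bsub>tensor M N\<^esub> = tcls M N (\<lambda>_. 0)"
  by (simp add: tensor_def)

lemma tensor_abelian:
  shows "abelian_group (tensor M N)"
proof (rule abelian_groupI)
  fix x y assume "x \<in> carrier (tensor M N)" "y \<in> carrier (tensor M N)"
  then obtain f g where f: "f \<in> fgen M N" "x = tcls M N f" and g: "g \<in> fgen M N" "y = tcls M N g"
    by (auto simp: tensor_carrier)
  show "x \<oplus>\<^bsub>tensor M N\<^esub> y \<in> carrier (tensor M N)"
    using f g by (auto simp: tensor_add_tcls tensor_carrier intro!: fgen_add)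
  show "x \<oplus>\<^bsub>tensor M N\<^esub> y = y \<oplus>\<^bsub>tensor M N\<^esub> x"
    using f g by (simp add: tensor_add_tcls add.commute)
next
  show "\<zero>\<^bsub>tensor M N\<^esub> \<in> carrier (tensor M N)"
    by (auto simp: tensor_zero tensor_carrier intro: bexI[of _ "\<lambda>_. 0"])
next
  fix x y z assume "x \<in> carrier (tensor M N)" "y \<in> carrier (tensor M N)" "z \<in> carrier (tensor M N)"
  then obtain f g h where f: "f \<in> fgen M N" "x = tcls M N f" and g: "g \<in> fgen M N" "y = tcls M N g"
    and h: "h \<in> fgen M N" "z = tcls M N h"
    by (auto simp: tensor_carrier)
  show "x \<oplus>\<^bsub>tensor M N\<^esub> y \<oplus>\<^bsub>tensor M N\<^esub> z = x \<oplus>\<^bsub>tensor M N\<^esub> (y \<oplus>\<^bsub>tensor M N\<^esub> z)"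
    using f g h by (simp add: tensor_add_tcls fgen_add add.assoc)
next
  fix x assume "x \<in> carrier (tensor M N)"
  then obtain f where f: "f \<in> fgen M N" "x = tcls M N f" by (auto simp: tensor_carrier)
  show "\<zero>\<^bsub>tensor M N\<^esub> \<oplus>\<^bsub>tensor M N\<^esub> x = x"
    using f by (simp add: tensor_zero tensor_add_tcls)
  have "tcls M N (\<lambda>p. - f p) \<oplus>\<^bsub>tensor M N\<^esub> x = \<zero>\<^bsub>tensor M N\<^esub>"
    using f by (simp add: tensor_zero tensor_add_tcls fgen_neg)
  moreover have "tcls M N (\<lambda>p. - f p) \<in> carrier (tensor M N)"
    using f by (auto simp: tensor_carrier intro: fgen_neg)
  ultimately show "\<exists>y\<in>carrier (tensor M N). y \<oplus>\<^bsub>tensor M N\<^esub> x = \<zero>\<^bsub>tensor M N\<^esub>" by blast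
qed

lemma tensor_neg:
  assumes f: "f \<in> fgen M N"
  shows "\<ominus>\<^bsub>tensor M N\<^esub> tcls M N f = tcls M N (\<lambda>p. - f p)"
proof -
  interpret abelian_group "tensor M N" by (rule tensor_abelian)
  have "tcls M N (\<lambda>p. - f p) \<oplus>\<^bsub>tensor M N\<^esub> tcls M N f = \<zero>\<^bsub>tensor M N\<^esub>"
    using f by (simp add: tensor_add_tcls fgen_neg tensor_zero)
  moreover have "tcls M N f \<in> carrier (tensor M N)" "tcls M N (\<lambda>p. - f p) \<in> carrier (tensor M N)"
    using f fgen_neg[OF f] by (auto simp: tensor_carrier)
  ultimately show ?thesis by (metis add.inv_equality)
qed

lemma tensor_pow_nat:
  assumes f: "f \<in> fgen M N"
  shows "[(n::nat)] \<cdot>\<^bsub>tensor M N\<^esub> tcls M N f = tcls M N (\<lambda>p. int n * f p)"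
proof (induction n)
  interpret abelian_group "tensor M N" by (rule tensor_abelian)
  { case 0 show ?case by (simp add: tensor_zero) }
  { case (Suc n)
    have "[Suc n] \<cdot>\<^bsub>tensor M N\<^esub> tcls M N f = [n] \<cdot>\<^bsub>tensor M N\<^esub> tcls M N f \<oplus>\<^bsub>tensor M N\<^esub> tcls M N f"
      by (simp add: add.nat_pow_Suc)
    also have "\<dots> = tcls M N (\<lambda>p. int n * f p + f p)" using Suc tensor_add_tcls[OF fgen_scale[OF f] f] by simp
    also have "(\<lambda>p. int n * f p + f p) = (\<lambda>p. int (Suc n) * f p)" by (auto simp: algebra_simps)
    finally show ?case . }
qed

lemma tensor_pow:
  assumes f: "f \<in> fgen M N"
  shows "[(k::int)] \<cdot>\<^bsub>tensor M N\<^esub> tcls M N f = tcls M N (\<lambda>p. k * f p)"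
proof (cases "k \<ge> 0")
  case True
  then show ?thesis using tensor_pow_nat[OF f, of "nat k"] by (simp add: add_pow_int_ge)
next
  case False
  then have "[k] \<cdot>\<^bsub>tensor M N\<^esub> tcls M N f = \<ominus>\<^bsub>tensor M N\<^esub> tcls M N (\<lambda>p. int (nat (- k)) * f p)"
    using tensor_pow_nat[OF f, of "nat (-k)"] by (simp add: add_pow_int_lt)
  also have "\<dots> = tcls M N (\<lambda>p. k * f p)" using False tensor_neg[OF fgen_scale[OF f, of "int (nat (-k))"]] by simp
  finally show ?thesis .
qed

lemma tensor_finsum:
  assumes I: "finite I" and F: "\<And>i. i \<in> I \<Longrightarrow> F i \<in> fgen M N"
  shows "finsum (tensor M N) (\<lambda>i. tcls M N (F i)) I = tcls M N (\<lambda>p. \<Sum>i\<in>I. F i p)"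
  using I F
proof (induction I rule: finite_induct)
  interpret abelian_group "tensor M N" by (rule tensor_abelian)
  { case empty show ?case by (simp add: tensor_zero) }
  { case (insert x I)
    have c: "(\<lambda>i. tcls M N (F i)) \<in> I \<rightarrow> carrier (tensor M N)" "tcls M N (F x) \<in> carrier (tensor M N)"
      using insert.prems by auto
    have "finsum (tensor M N) (\<lambda>i. tcls M N (F i)) (insert x I) = tcls M N (F x) \<oplus>\<^bsub>tensor M N\<^esub> finsum (tensor M N) (\<lambda>i. tcls M N (F i)) I"
      using insert.hyps c by (simp add: finsum_insert)
    also have "\<dots> = tcls M N (\<lambda>p. F x p + (\<Sum>i\<in>I. F i p))"
    proof -
      have a: "F x \<in> fgen M N" using insert.prems by simp
      have b: "(\<lambda>p. \<Sum>i\<in>I. F i p) \<in> fgen M N" using insert.prems insert.hyps by (intro fgen_sum) auto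
      show ?thesis using insert.IH insert.prems tensor_add_tcls[OF a b] by simp
    qed
    finally show ?case using insert.hyps by simp }
qed

lemma tmk_carrier: "m \<in> carrier M \<Longrightarrow> n \<in> carrier N \<Longrightarrow> tmk M N m n \<in> carrier (tensor M N)"
  unfolding tmk_def tensor_carrier by (auto intro: fgen_dlt)

lemma tensor_dec:
  assumes f: "f \<in> fgen M N"
  shows "tcls M N f = finsum (tensor M N) (\<lambda>p. [f p] \<cdot>\<^bsub>tensor M N\<^esub> tmk M N (fst p) (snd p)) {p. f p \<noteq> 0}"
proof -
  let ?S = "{p. f p \<noteq> 0}"
  have S: "finite ?S" "?S \<subseteq> carrier M \<times> carrier N" using f by (auto simp: fgen_def)
  interpret abelian_group "tensor M N" by (rule tensor_abelian)
  have "finsum (tensor M N) (\<lambda>p. [f p] \<cdot>\<^bsub>tensor M N\<^esub> tmk M N (fst p) (snd p)) ?S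
      = finsum (tensor M N) (\<lambda>p. tcls M N (\<lambda>q. f p * dlt p q)) ?S"
  proof (rule finsum_cong')
    show "\<And>p. p \<in> ?S \<Longrightarrow> [f p] \<cdot>\<^bsub>tensor M N\<^esub> tmk M N (fst p) (snd p) = tcls M N (\<lambda>q. f p * dlt p q)"
      using S by (auto simp: tmk_def intro!: tensor_pow fgen_dlt)
    show "(\<lambda>p. tcls M N (\<lambda>q. f p * dlt p q)) \<in> ?S \<rightarrow> carrier (tensor M N)"
      using S by (auto intro!: tcls_carrier fgen_scale fgen_dlt)
  qed simp
  also have "\<dots> = tcls M N (\<lambda>q. \<Sum>p\<in>?S. f p * dlt p q)"
    using S by (intro tensor_finsum) (auto intro!: fgen_scale fgen_dlt)
  also have "(\<lambda>q. \<Sum>p\<in>?S. f p * dlt p q) = f"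
  proof
    fix q
    have "(\<Sum>p\<in>?S. f p * dlt p q) = (\<Sum>p\<in>?S. if q = p then f p else 0)"
      by (rule sum.cong) (auto simp: dlt_def)
    also have "\<dots> = f q" using S(1) by (simp add: sum.delta)
    finally show "(\<Sum>p\<in>?S. f p * dlt p q) = f q" .
  qed
  finally show ?thesis by simp
qed

section \<open>Balanced maps and the universal property\<close>

definition gensum :: "('t, 'z) ring_scheme \<Rightarrow> ('m \<Rightarrow> 'n \<Rightarrow> 't) \<Rightarrow> ('m \<times> 'n \<Rightarrow> int) \<Rightarrow> 't" where
  "gensum T \<beta> f = (\<Oplus>\<^bsub>T\<^esub> p\<in>{p. f p \<noteq> 0}. [f p] \<cdot>\<^bsub>T\<^esub> \<beta> (fst p) (snd p))"

lemma tlift_gensum: "tlift T \<beta> X = gensum T \<beta> (rep X)"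
  by (simp add: tlift_def gensum_def)

definition balanced :: "('a::ring_1, 'm, 'x) bimod_scheme \<Rightarrow> ('a, 'n, 'y) bimod_scheme \<Rightarrow> ('t, 'z) ring_scheme
    \<Rightarrow> ('m \<Rightarrow> 'n \<Rightarrow> 't) \<Rightarrow> bool" where
  "balanced M N T \<beta> \<longleftrightarrow> abelian_group T \<and> (\<forall>m\<in>carrier M. \<forall>n\<in>carrier N. \<beta> m n \<in> carrier T) \<and>
     (\<forall>m\<in>carrier M. \<forall>m'\<in>carrier M. \<forall>n\<in>carrier N. \<beta> (m \<oplus>\<^bsub>M\<^esub> m') n = \<beta> m n \<oplus>\<^bsub>T\<^esub> \<beta> m' n) \<and>
     (\<forall>m\<in>carrier M. \<forall>n\<in>carrier N. \<forall>n'\<in>carrier N. \<beta> m (n \<oplus>\<^bsub>N\<^esub> n') = \<beta> m n \<oplus>\<^bsub>T\<^esub> \<beta> m n') \<and>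
     (\<forall>m\<in>carrier M. \<forall>n\<in>carrier N. \<forall>a. \<beta> (ract M m a) n = \<beta> m (lact N a n))"

lemma balancedI:
  assumes "abelian_group T"
    "\<And>m n. m \<in> carrier M \<Longrightarrow> n \<in> carrier N \<Longrightarrow> \<beta> m n \<in> carrier T"
    "\<And>m m' n. m \<in> carrier M \<Longrightarrow> m' \<in> carrier M \<Longrightarrow> n \<in> carrier N \<Longrightarrow> \<beta> (m \<oplus>\<^bsub>M\<^esub> m') n = \<beta> m n \<oplus>\<^bsub>T\<^esub> \<beta> m' n"
    "\<And>m n n'. m \<in> carrier M \<Longrightarrow> n \<in> carrier N \<Longrightarrow> n' \<in> carrier N \<Longrightarrow> \<beta> m (n \<oplus>\<^bsub>N\<^esub> n') = \<beta> m n \<oplus>\<^bsub>T\<^esub> \<beta> m n'"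
    "\<And>m n a. m \<in> carrier M \<Longrightarrow> n \<in> carrier N \<Longrightarrow> \<beta> (ract M m a) n = \<beta> m (lact N a n)"
  shows "balanced M N T \<beta>"
  using assms unfolding balanced_def by blast

lemma balancedD:
  assumes "balanced M N T \<beta>"
  shows "abelian_group T"
    "\<And>m n. m \<in> carrier M \<Longrightarrow> n \<in> carrier N \<Longrightarrow> \<beta> m n \<in> carrier T"
    "\<And>m m' n. m \<in> carrier M \<Longrightarrow> m' \<in> carrier M \<Longrightarrow> n \<in> carrier N \<Longrightarrow> \<beta> (m \<oplus>\<^bsub>M\<^esub> m') n = \<beta> m n \<oplus>\<^bsub>T\<^esub> \<beta> m' n"
    "\<And>m n n'. m \<in> carrier M \<Longrightarrow> n \<in> carrier N \<Longrightarrow> n' \<in> carrier N \<Longrightarrow> \<beta> m (n \<oplus>\<^bsub>N\<^esub> n') = \<beta> m n \<oplus>\<^bsub>T\<^esub> \<beta> m n'"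
    "\<And>m n a. m \<in> carrier M \<Longrightarrow> n \<in> carrier N \<Longrightarrow> \<beta> (ract M m a) n = \<beta> m (lact N a n)"
  using assms unfolding balanced_def by blast+

definition closed_on :: "('a, 'm, 'x) bimod_scheme \<Rightarrow> ('a, 'n, 'y) bimod_scheme \<Rightarrow> ('t, 'z) ring_scheme
    \<Rightarrow> ('m \<Rightarrow> 'n \<Rightarrow> 't) \<Rightarrow> bool" where
  "closed_on M N T \<beta> \<longleftrightarrow> (\<forall>m\<in>carrier M. \<forall>n\<in>carrier N. \<beta> m n \<in> carrier T)"

lemma balanced_closed: "balanced M N T \<beta> \<Longrightarrow> closed_on M N T \<beta>"
  by (simp add: balanced_def closed_on_def)

lemma gensum_superset:
  assumes ag: "abelian_group T" and cl0: "closed_on M N T \<beta>"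
    and f: "f \<in> fgen M N" and D: "finite D" "{p. f p \<noteq> 0} \<subseteq> D" "D \<subseteq> carrier M \<times> carrier N"
  shows "gensum T \<beta> f = (\<Oplus>\<^bsub>T\<^esub> p\<in>D. [f p] \<cdot>\<^bsub>T\<^esub> \<beta> (fst p) (snd p))"
proof -
  have cl: "\<And>m n. m \<in> carrier M \<Longrightarrow> n \<in> carrier N \<Longrightarrow> \<beta> m n \<in> carrier T" using cl0 by (auto simp: closed_on_def)
  interpret abelian_group T by (rule ag)
  show ?thesis unfolding gensum_def
    by (rule add.finprod_mono_neutral_cong_left) (use D cl in auto)
qed

lemma gensum_closed:
  assumes ag: "abelian_group T" and cl0: "closed_on M N T \<beta>"
    and f: "f \<in> fgen M N"
  shows "gensum T \<beta> f \<in> carrier T"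
proof -
  have cl: "\<And>m n. m \<in> carrier M \<Longrightarrow> n \<in> carrier N \<Longrightarrow> \<beta> m n \<in> carrier T" using cl0 by (auto simp: closed_on_def)
  interpret abelian_group T by (rule ag)
  show ?thesis unfolding gensum_def using f cl by (intro finsum_closed) (auto simp: fgen_def)
qed

lemma gensum_add:
  assumes ag: "abelian_group T" and cl0: "closed_on M N T \<beta>"
    and f: "f \<in> fgen M N" and g: "g \<in> fgen M N"
  shows "gensum T \<beta> (\<lambda>p. f p + g p) = gensum T \<beta> f \<oplus>\<^bsub>T\<^esub> gensum T \<beta> g"
proof -
  have cl: "\<And>m n. m \<in> carrier M \<Longrightarrow> n \<in> carrier N \<Longrightarrow> \<beta> m n \<in> carrier T" using cl0 by (auto simp: closed_on_def)
  interpret abelian_group T by (rule ag)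
  let ?D = "{p. f p \<noteq> 0} \<union> {p. g p \<noteq> 0}"
  have D: "finite ?D" "?D \<subseteq> carrier M \<times> carrier N" using f g by (auto simp: fgen_def)
  have fg: "(\<lambda>p. f p + g p) \<in> fgen M N" using f g by (rule fgen_add)
  have "gensum T \<beta> (\<lambda>p. f p + g p) = (\<Oplus>\<^bsub>T\<^esub> p\<in>?D. [(f p + g p)] \<cdot>\<^bsub>T\<^esub> \<beta> (fst p) (snd p))"
    by (rule gensum_superset[OF ag cl0 fg]) (use D in auto)
  also have "\<dots> = (\<Oplus>\<^bsub>T\<^esub> p\<in>?D. [f p] \<cdot>\<^bsub>T\<^esub> \<beta> (fst p) (snd p) \<oplus>\<^bsub>T\<^esub> [g p] \<cdot>\<^bsub>T\<^esub> \<beta> (fst p) (snd p))"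
    by (rule finsum_cong') (use D cl in \<open>auto simp: add.int_pow_mult\<close>)
  also have "\<dots> = (\<Oplus>\<^bsub>T\<^esub> p\<in>?D. [f p] \<cdot>\<^bsub>T\<^esub> \<beta> (fst p) (snd p)) \<oplus>\<^bsub>T\<^esub> (\<Oplus>\<^bsub>T\<^esub> p\<in>?D. [g p] \<cdot>\<^bsub>T\<^esub> \<beta> (fst p) (snd p))"
    by (rule finsum_addf) (use D cl in auto)
  also have "\<dots> = gensum T \<beta> f \<oplus>\<^bsub>T\<^esub> gensum T \<beta> g"
    using gensum_superset[OF ag cl0 f, of ?D] gensum_superset[OF ag cl0 g, of ?D] D by auto
  finally show ?thesis .
qed

lemma gensum_zero: "abelian_group T \<Longrightarrow> gensum T \<beta> (\<lambda>_. 0) = \<zero>\<^bsub>T\<^esub>"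
  by (simp add: gensum_def abelian_monoid.finsum_empty abelian_group.axioms(1))

lemma gensum_neg:
  assumes ag: "abelian_group T" and cl0: "closed_on M N T \<beta>"
    and f: "f \<in> fgen M N"
  shows "gensum T \<beta> (\<lambda>p. - f p) = \<ominus>\<^bsub>T\<^esub> gensum T \<beta> f"
proof -
  interpret abelian_group T by (rule ag)
  have "gensum T \<beta> (\<lambda>p. - f p) \<oplus>\<^bsub>T\<^esub> gensum T \<beta> f = gensum T \<beta> (\<lambda>p. - f p + f p)"
    using gensum_add[OF ag cl0 fgen_neg[OF f] f] by simp
  also have "\<dots> = \<zero>\<^bsub>T\<^esub>" using gensum_zero[OF ag] by simp
  finally have "gensum T \<beta> (\<lambda>p. - f p) \<oplus>\<^bsub>T\<^esub> gensum T \<beta> f = \<zero>\<^bsub>T\<^esub>" .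
  then show ?thesis
    using gensum_closed[OF ag cl0 f] gensum_closed[OF ag cl0 fgen_neg[OF f]]
    by (metis add.inv_equality)
qed

lemma gensum_diff:
  assumes ag: "abelian_group T" and cl0: "closed_on M N T \<beta>"
    and f: "f \<in> fgen M N" and g: "g \<in> fgen M N"
  shows "gensum T \<beta> (\<lambda>p. f p - g p) = gensum T \<beta> f \<ominus>\<^bsub>T\<^esub> gensum T \<beta> g"
  using gensum_add[OF ag cl0 f fgen_neg[OF g]] gensum_neg[OF ag cl0 g] by (simp add: a_minus_def)

lemma gensum_dlt:
  assumes ag: "abelian_group T" and cl0: "closed_on M N T \<beta>"
    and p: "p \<in> carrier M \<times> carrier N"
  shows "gensum T \<beta> (dlt p) = \<beta> (fst p) (snd p)"
proof -
  have cl: "\<And>m n. m \<in> carrier M \<Longrightarrow> n \<in> carrier N \<Longrightarrow> \<beta> m n \<in> carrier T" using cl0 by (auto simp: closed_on_def)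
  interpret abelian_group T by (rule ag)
  have "{q. dlt p q \<noteq> 0} = {p}" by (auto simp: dlt_def)
  then show ?thesis using p cl by (auto simp: gensum_def dlt_def)
qed

lemma gensum_dlt3:
  assumes ag: "abelian_group T" and cl0: "closed_on M N T \<beta>"
    and p: "p \<in> carrier M \<times> carrier N" and q: "q \<in> carrier M \<times> carrier N" and r: "r \<in> carrier M \<times> carrier N"
  shows "gensum T \<beta> (\<lambda>x. dlt p x - dlt q x - dlt r x)
       = \<beta> (fst p) (snd p) \<ominus>\<^bsub>T\<^esub> \<beta> (fst q) (snd q) \<ominus>\<^bsub>T\<^esub> \<beta> (fst r) (snd r)"
  using gensum_diff[OF ag cl0 fgen_diff[OF fgen_dlt[OF p] fgen_dlt[OF q]] fgen_dlt[OF r]]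
    gensum_diff[OF ag cl0 fgen_dlt[OF p] fgen_dlt[OF q]] gensum_dlt[OF ag cl0] p q r by simp

text \<open>For balanced \<open>\<beta>\<close>, \<open>gensum\<close> kills the relation subgroup, hence is constant on cosets;
  so \<open>tlift T \<beta>\<close> is the additive map \<open>M \<otimes> N \<rightarrow> T\<close> with \<open>m \<otimes> n \<mapsto> \<beta> m n\<close>.\<close>

lemma gensum_trel:
  assumes b: "balanced M N T \<beta>" and ok: "tensorable M N" and f: "f \<in> trel M N"
  shows "gensum T \<beta> f = \<zero>\<^bsub>T\<^esub>"
  using f
proof (induction rule: trel.induct)
  note ag = balancedD(1)[OF b] and cl0 = balanced_closed[OF b] and cl = balancedD(2)[OF b]
  interpret abelian_group T by (rule ag)
  { case zero show ?case by (rule gensum_zero[OF ag]) }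
  { case (add f g)
    show ?case using gensum_add[OF ag cl0 trel_fgen[OF ok add.hyps(1)] trel_fgen[OF ok add.hyps(2)]] add.IH by simp }
  { case (neg f)
    show ?case using gensum_neg[OF ag cl0 trel_fgen[OF ok neg.hyps]] neg.IH by simp }
  { case (gen_l m m' n)
    have "m \<oplus>\<^bsub>M\<^esub> m' \<in> carrier M" using ok gen_l unfolding tensorable_def by (meson abelian_groupE(1))
    then show ?case
      using gensum_dlt3[OF ag cl0, of "(m \<oplus>\<^bsub>M\<^esub> m', n)" "(m, n)" "(m', n)"] balancedD(3)[OF b] gen_l
        ag_cancel3[OF ag] cl by simp }
  { case (gen_r m n n')
    have "n \<oplus>\<^bsub>N\<^esub> n' \<in> carrier N" using ok gen_r unfolding tensorable_def by (meson abelian_groupE(1))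
    then show ?case
      using gensum_dlt3[OF ag cl0, of "(m, n \<oplus>\<^bsub>N\<^esub> n')" "(m, n)" "(m, n')"] balancedD(4)[OF b] gen_r
        ag_cancel3[OF ag] cl by simp }
  { case (gen_bal m n a)
    have c: "ract M m a \<in> carrier M" "lact N a n \<in> carrier N" using ok gen_bal unfolding tensorable_def by auto
    have "gensum T \<beta> (\<lambda>p. dlt (ract M m a, n) p - dlt (m, lact N a n) p)
       = \<beta> (ract M m a) n \<ominus>\<^bsub>T\<^esub> \<beta> m (lact N a n)"
      using gensum_diff[OF ag cl0 fgen_dlt fgen_dlt] gensum_dlt[OF ag cl0] c gen_bal by simp
    also have "\<dots> = \<zero>\<^bsub>T\<^esub>" using balancedD(5)[OF b] gen_bal ag_minus_self[OF ag] cl c by simp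
    finally show ?case . }
qed

lemma gensum_welldef:
  assumes b: "balanced M N T \<beta>" and ok: "tensorable M N" and f: "f \<in> fgen M N" and g: "g \<in> fgen M N"
    and fg: "(\<lambda>p. f p - g p) \<in> trel M N"
  shows "gensum T \<beta> f = gensum T \<beta> g"
proof -
  note ag = balancedD(1)[OF b] and cl0 = balanced_closed[OF b]
  have "gensum T \<beta> f \<ominus>\<^bsub>T\<^esub> gensum T \<beta> g = \<zero>\<^bsub>T\<^esub>"
    using gensum_diff[OF ag cl0 f g] gensum_trel[OF b ok fg] by simp
  then show ?thesis using ag_minus_zero_eq[OF ag gensum_closed[OF ag cl0 f] gensum_closed[OF ag cl0 g]] by simp
qed

lemma tlift_tcls:
  assumes b: "balanced M N T \<beta>" and ok: "tensorable M N" and f: "f \<in> fgen M N"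
  shows "tlift T \<beta> (tcls M N f) = gensum T \<beta> f"
  unfolding tlift_gensum using gensum_welldef[OF b ok rep_tcls(1)[OF f] f rep_tcls(2)[OF f]] .

lemma tlift_closed:
  assumes ag: "abelian_group T" and cl0: "closed_on M N T \<beta>"
    and X: "X \<in> carrier (tensor M N)"
  shows "tlift T \<beta> X \<in> carrier T"
  unfolding tlift_gensum using gensum_closed[OF ag cl0 rep_fgen[OF X]] .

lemma tlift_add:
  assumes b: "balanced M N T \<beta>" and ok: "tensorable M N"
    and X: "X \<in> carrier (tensor M N)" and Y: "Y \<in> carrier (tensor M N)"
  shows "tlift T \<beta> (X \<oplus>\<^bsub>tensor M N\<^esub> Y) = tlift T \<beta> X \<oplus>\<^bsub>T\<^esub> tlift T \<beta> Y"
proof -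
  obtain f g where f: "f \<in> fgen M N" "X = tcls M N f" and g: "g \<in> fgen M N" "Y = tcls M N g"
    using X Y by (auto simp: tensor_carrier)
  show ?thesis using f g tensor_add_tcls[OF f(1) g(1)] tlift_tcls[OF b ok] fgen_add[OF f(1) g(1)]
      gensum_add[OF balancedD(1)[OF b] balanced_closed[OF b] f(1) g(1)] by simp
qed

lemma tlift_tmk:
  assumes b: "balanced M N T \<beta>" and ok: "tensorable M N" and m: "m \<in> carrier M" and n: "n \<in> carrier N"
  shows "tlift T \<beta> (tmk M N m n) = \<beta> m n"
proof -
  show ?thesis unfolding tmk_def using tlift_tcls[OF b ok fgen_dlt[of "(m,n)"]] gensum_dlt[OF balancedD(1)[OF b] balanced_closed[OF b], of "(m,n)"] m n by simp
qed

lemma addhom_tlift: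
  assumes b: "balanced M N T \<beta>" and ok: "tensorable M N"
  shows "addhom (tensor M N) T (tlift T \<beta>)"
  using tlift_closed[OF balancedD(1)[OF b] balanced_closed[OF b]] tlift_add[OF b ok] by (auto intro!: addhomI)

lemma balanced_tmk:
  assumes ok: "tensorable M N"
  shows "balanced M N (tensor M N) (tmk M N)"
proof (rule balancedI)
  show "abelian_group (tensor M N)" by (rule tensor_abelian)
  show "\<And>m n. m \<in> carrier M \<Longrightarrow> n \<in> carrier N \<Longrightarrow> tmk M N m n \<in> carrier (tensor M N)" by (rule tmk_carrier)
next
  fix m m' n assume a: "m \<in> carrier M" "m' \<in> carrier M" "n \<in> carrier N"
  have mm: "m \<oplus>\<^bsub>M\<^esub> m' \<in> carrier M" using ok a unfolding tensorable_def by (meson abelian_groupE(1))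
  have e: "(\<lambda>p. dlt (m \<oplus>\<^bsub>M\<^esub> m', n) p - (dlt (m, n) p + dlt (m', n) p)) = (\<lambda>p. dlt (m \<oplus>\<^bsub>M\<^esub> m', n) p - dlt (m, n) p - dlt (m', n) p)"
    by auto
  have "tcls M N (dlt (m \<oplus>\<^bsub>M\<^esub> m', n)) = tcls M N (\<lambda>p. dlt (m, n) p + dlt (m', n) p)"
    using tcls_eq_iff[of "dlt (m \<oplus>\<^bsub>M\<^esub> m', n)" M N "\<lambda>p. dlt (m, n) p + dlt (m', n) p"] trel.gen_l[OF a] mm a
    by (simp add: fgen_dlt fgen_add e)
  then show "tmk M N (m \<oplus>\<^bsub>M\<^esub> m') n = tmk M N m n \<oplus>\<^bsub>tensor M N\<^esub> tmk M N m' n"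
    unfolding tmk_def using tensor_add_tcls[of "dlt (m,n)" M N "dlt (m',n)"] a by (simp add: fgen_dlt)
next
  fix m n n' assume a: "m \<in> carrier M" "n \<in> carrier N" "n' \<in> carrier N"
  have nn: "n \<oplus>\<^bsub>N\<^esub> n' \<in> carrier N" using ok a unfolding tensorable_def by (meson abelian_groupE(1))
  have e: "(\<lambda>p. dlt (m, n \<oplus>\<^bsub>N\<^esub> n') p - (dlt (m, n) p + dlt (m, n') p)) = (\<lambda>p. dlt (m, n \<oplus>\<^bsub>N\<^esub> n') p - dlt (m, n) p - dlt (m, n') p)"
    by auto
  have "tcls M N (dlt (m, n \<oplus>\<^bsub>N\<^esub> n')) = tcls M N (\<lambda>p. dlt (m, n) p + dlt (m, n') p)"
    using tcls_eq_iff[of "dlt (m, n \<oplus>\<^bsub>N\<^esub> n')" M N "\<lambda>p. dlt (m, n) p + dlt (m, n') p"] trel.gen_r[OF a] nn a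
    by (simp add: fgen_dlt fgen_add e)
  then show "tmk M N m (n \<oplus>\<^bsub>N\<^esub> n') = tmk M N m n \<oplus>\<^bsub>tensor M N\<^esub> tmk M N m n'"
    unfolding tmk_def using tensor_add_tcls[of "dlt (m,n)" M N "dlt (m,n')"] a by (simp add: fgen_dlt)
next
  fix m n a assume a: "m \<in> carrier M" "n \<in> carrier N"
  have c: "ract M m a \<in> carrier M" "lact N a n \<in> carrier N" using ok a unfolding tensorable_def by auto
  show "tmk M N (ract M m a) n = tmk M N m (lact N a n)"
    unfolding tmk_def using tcls_eq_iff[of "dlt (ract M m a, n)" M N "dlt (m, lact N a n)"] trel.gen_bal[OF a, of a] c a
    by (simp add: fgen_dlt)
qed

lemma tensor_hom_ext:
  assumes T: "abelian_group T" and F: "addhom (tensor M N) T F" and G: "addhom (tensor M N) T G"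
    and gen: "\<And>m n. m \<in> carrier M \<Longrightarrow> n \<in> carrier N \<Longrightarrow> F (tmk M N m n) = G (tmk M N m n)"
    and X: "X \<in> carrier (tensor M N)"
  shows "F X = G X"
proof -
  interpret abelian_group T by fact
  interpret TT: abelian_group "tensor M N" by (rule tensor_abelian)
  obtain f where f: "f \<in> fgen M N" "X = tcls M N f" using X by (auto simp: tensor_carrier)
  let ?S = "{p. f p \<noteq> 0}"
  have S: "finite ?S" "?S \<subseteq> carrier M \<times> carrier N" using f by (auto simp: fgen_def)
  have c: "(\<lambda>p. [f p] \<cdot>\<^bsub>tensor M N\<^esub> tmk M N (fst p) (snd p)) \<in> ?S \<rightarrow> carrier (tensor M N)"
    using S by (auto intro!: tmk_carrier TT.add.int_pow_closed)
  have "F X = finsum T (\<lambda>p. F ([f p] \<cdot>\<^bsub>tensor M N\<^esub> tmk M N (fst p) (snd p))) ?S"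
    unfolding f(2) tensor_dec[OF f(1)] by (rule addhom_finsum[OF tensor_abelian T F S(1) c])
  also have "\<dots> = finsum T (\<lambda>p. G ([f p] \<cdot>\<^bsub>tensor M N\<^esub> tmk M N (fst p) (snd p))) ?S"
    using S addhom_pow[OF tensor_abelian T F] addhom_pow[OF tensor_abelian T G] gen
      addhomD(1)[OF G] c
    by (intro finsum_cong') (auto simp: tmk_carrier)
  also have "\<dots> = G X"
    unfolding f(2) tensor_dec[OF f(1)] by (rule addhom_finsum[OF tensor_abelian T G S(1) c, symmetric])
  finally show ?thesis .
qed

lemma tlift_hom:
  assumes T: "abelian_group T" and T': "abelian_group T'" and F: "addhom T T' F"
    and cl: "closed_on M N T \<beta>" and X: "X \<in> carrier (tensor M N)"
  shows "F (tlift T \<beta> X) = tlift T' (\<lambda>m n. F (\<beta> m n)) X"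
proof -
  interpret abelian_group T by fact
  interpret T': abelian_group T' by fact
  have r: "rep X \<in> fgen M N" by (rule rep_fgen[OF X])
  let ?S = "{p. rep X p \<noteq> 0}"
  have S: "finite ?S" "?S \<subseteq> carrier M \<times> carrier N" using r by (auto simp: fgen_def)
  have c: "(\<lambda>p. [rep X p] \<cdot>\<^bsub>T\<^esub> \<beta> (fst p) (snd p)) \<in> ?S \<rightarrow> carrier T"
    using S cl by (auto simp: closed_on_def)
  show ?thesis unfolding tlift_def
    using addhom_finsum[OF T T' F S(1) c] addhom_pow[OF T T' F] S cl
    by (auto simp: closed_on_def intro!: T'.finsum_cong' addhomD(1)[OF F] T'.add.int_pow_closed)
qed

lemma tlift_cong:
  assumes T: "abelian_group T" and cl: "closed_on M N T \<beta>" and eq: "\<And>m n. m \<in> carrier M \<Longrightarrow> n \<in> carrier N \<Longrightarrow> \<beta> m n = \<beta>' m n"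
    and X: "X \<in> carrier (tensor M N)"
  shows "tlift T \<beta> X = tlift T \<beta>' X"
proof -
  have r: "rep X \<in> fgen M N" by (rule rep_fgen[OF X])
  interpret abelian_group T by fact
  show ?thesis unfolding tlift_def
    using r eq cl by (intro finsum_cong') (auto simp: fgen_def closed_on_def)
qed

text \<open>\<open>compatible M N M' N' \<phi> \<psi>\<close>: \<open>\<phi>\<close> is right A-linear and \<open>\<psi>\<close> left A-linear, so that
  \<open>\<phi> \<otimes> \<psi> : M \<otimes> N \<rightarrow> M' \<otimes> N'\<close> is well defined.\<close>

definition compatible :: "('a::ring_1, 'm, 'x) bimod_scheme \<Rightarrow> ('a, 'n, 'y) bimod_scheme
    \<Rightarrow> ('a, 'm2, 'x2) bimod_scheme \<Rightarrow> ('a, 'n2, 'y2) bimod_scheme \<Rightarrow> ('m \<Rightarrow> 'm2) \<Rightarrow> ('n \<Rightarrow> 'n2) \<Rightarrow> bool" where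
  "compatible M N M' N' \<phi> \<psi> \<longleftrightarrow> (\<forall>m\<in>carrier M. \<phi> m \<in> carrier M') \<and> (\<forall>n\<in>carrier N. \<psi> n \<in> carrier N') \<and>
     (\<forall>m\<in>carrier M. \<forall>m'\<in>carrier M. \<phi> (m \<oplus>\<^bsub>M\<^esub> m') = \<phi> m \<oplus>\<^bsub>M'\<^esub> \<phi> m') \<and>
     (\<forall>n\<in>carrier N. \<forall>n'\<in>carrier N. \<psi> (n \<oplus>\<^bsub>N\<^esub> n') = \<psi> n \<oplus>\<^bsub>N'\<^esub> \<psi> n') \<and>
     (\<forall>m\<in>carrier M. \<forall>a. \<phi> (ract M m a) = ract M' (\<phi> m) a) \<and>
     (\<forall>n\<in>carrier N. \<forall>a. \<psi> (lact N a n) = lact N' a (\<psi> n))"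

lemma compatibleI:
  assumes "\<And>m. m \<in> carrier M \<Longrightarrow> \<phi> m \<in> carrier M'" "\<And>n. n \<in> carrier N \<Longrightarrow> \<psi> n \<in> carrier N'"
    "\<And>m m'. m \<in> carrier M \<Longrightarrow> m' \<in> carrier M \<Longrightarrow> \<phi> (m \<oplus>\<^bsub>M\<^esub> m') = \<phi> m \<oplus>\<^bsub>M'\<^esub> \<phi> m'"
    "\<And>n n'. n \<in> carrier N \<Longrightarrow> n' \<in> carrier N \<Longrightarrow> \<psi> (n \<oplus>\<^bsub>N\<^esub> n') = \<psi> n \<oplus>\<^bsub>N'\<^esub> \<psi> n'"
    "\<And>m a. m \<in> carrier M \<Longrightarrow> \<phi> (ract M m a) = ract M' (\<phi> m) a"
    "\<And>n a. n \<in> carrier N \<Longrightarrow> \<psi> (lact N a n) = lact N' a (\<psi> n)"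
  shows "compatible M N M' N' \<phi> \<psi>"
  using assms unfolding compatible_def by blast

lemma compatibleD:
  assumes "compatible M N M' N' \<phi> \<psi>"
  shows "\<And>m. m \<in> carrier M \<Longrightarrow> \<phi> m \<in> carrier M'" "\<And>n. n \<in> carrier N \<Longrightarrow> \<psi> n \<in> carrier N'"
    "\<And>m m'. m \<in> carrier M \<Longrightarrow> m' \<in> carrier M \<Longrightarrow> \<phi> (m \<oplus>\<^bsub>M\<^esub> m') = \<phi> m \<oplus>\<^bsub>M'\<^esub> \<phi> m'"
    "\<And>n n'. n \<in> carrier N \<Longrightarrow> n' \<in> carrier N \<Longrightarrow> \<psi> (n \<oplus>\<^bsub>N\<^esub> n') = \<psi> n \<oplus>\<^bsub>N'\<^esub> \<psi> n'"
    "\<And>m a. m \<in> carrier M \<Longrightarrow> \<phi> (ract M m a) = ract M' (\<phi> m) a"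
    "\<And>n a. n \<in> carrier N \<Longrightarrow> \<psi> (lact N a n) = lact N' a (\<psi> n)"
  using assms unfolding compatible_def by blast+

lemma compatible_comp:
  assumes "compatible M N M' N' \<phi> \<psi>" "compatible M' N' M'' N'' \<phi>' \<psi>'"
  shows "compatible M N M'' N'' (\<lambda>m. \<phi>' (\<phi> m)) (\<lambda>n. \<psi>' (\<psi> n))"
  using compatibleD[OF assms(1)] compatibleD[OF assms(2)] by (intro compatibleI) auto

lemma compatible_id:
  assumes "tensorable M N"
  shows "compatible M N M N id id"
  using assms by (intro compatibleI) (auto simp: tensorable_def)

lemma balanced_comp:
  assumes b: "balanced M' N' T \<beta>" and c: "compatible M N M' N' \<phi> \<psi>"
  shows "balanced M N T (\<lambda>m n. \<beta> (\<phi> m) (\<psi> n))"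
  using balancedD[OF b] compatibleD[OF c] by (intro balancedI) auto

lemma fext_superset:
  assumes D: "finite D" "{p. f p \<noteq> 0} \<subseteq> D"
  shows "fext g f = (\<lambda>q. \<Sum>p\<in>D. f p * dlt (g p) q)"
proof
  fix q
  have "(\<Sum>p\<in>D. f p * dlt (g p) q) = (\<Sum>p\<in>D. if g p = q then f p else 0)"
    by (rule sum.cong) (auto simp: dlt_def)
  also have "\<dots> = (\<Sum>p\<in>{p\<in>D. g p = q}. f p)" using D(1) by (simp add: sum.inter_filter)
  also have "\<dots> = (\<Sum>p\<in>{p. f p \<noteq> 0 \<and> g p = q}. f p)"
    by (rule sum.mono_neutral_right) (use D in auto)
  finally show "fext g f q = (\<Sum>p\<in>D. f p * dlt (g p) q)" by (simp add: fext_def)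
qed

lemma fext_add:
  assumes f: "f \<in> fgen M N" and h: "h \<in> fgen M N"
  shows "fext g (\<lambda>p. f p + h p) = (\<lambda>q. fext g f q + fext g h q)"
proof -
  let ?D = "{p. f p \<noteq> 0} \<union> {p. h p \<noteq> 0}"
  have D: "finite ?D" using f h by (auto simp: fgen_def)
  have s1: "{p. f p + h p \<noteq> 0} \<subseteq> ?D" by auto
  have e1: "fext g (\<lambda>p. f p + h p) = (\<lambda>q. \<Sum>p\<in>?D. (f p + h p) * dlt (g p) q)" by (rule fext_superset[OF D s1])
  have e2: "fext g f = (\<lambda>q. \<Sum>p\<in>?D. f p * dlt (g p) q)" by (rule fext_superset[OF D]) auto
  have e3: "fext g h = (\<lambda>q. \<Sum>p\<in>?D. h p * dlt (g p) q)" by (rule fext_superset[OF D]) auto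
  show ?thesis unfolding e1 e2 e3 by (simp add: distrib_right sum.distrib)
qed

lemma fext_neg:
  assumes f: "f \<in> fgen M N"
  shows "fext g (\<lambda>p. - f p) = (\<lambda>q. - fext g f q)"
proof -
  have D: "finite {p. f p \<noteq> 0}" using f by (auto simp: fgen_def)
  have e1: "fext g (\<lambda>p. - f p) = (\<lambda>q. \<Sum>p\<in>{p. f p \<noteq> 0}. (- f p) * dlt (g p) q)" by (rule fext_superset[OF D]) auto
  have e2: "fext g f = (\<lambda>q. \<Sum>p\<in>{p. f p \<noteq> 0}. f p * dlt (g p) q)" by (rule fext_superset[OF D]) auto
  show ?thesis unfolding e1 e2 by (simp add: sum_negf)
qed

lemma fext_diff:
  assumes f: "f \<in> fgen M N" and h: "h \<in> fgen M N"
  shows "fext g (\<lambda>p. f p - h p) = (\<lambda>q. fext g f q - fext g h q)"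
  using fext_add[OF f fgen_neg[OF h], of g] fext_neg[OF h, of g] by simp

lemma fext_dlt: "fext g (dlt p) = dlt (g p)"
proof -
  have "{q. dlt p q \<noteq> 0} = {p}" by (auto simp: dlt_def)
  then show ?thesis using fext_superset[of "{p}" "dlt p" g] by (auto simp: dlt_def)
qed

lemma fext_zero: "fext g (\<lambda>_. 0) = (\<lambda>_. 0)"
  by (simp add: fext_def)

lemma fext_fgen:
  assumes f: "f \<in> fgen M N" and g: "\<And>p. p \<in> carrier M \<times> carrier N \<Longrightarrow> g p \<in> carrier M' \<times> carrier N'"
  shows "fext g f \<in> fgen M' N'"
proof -
  have sub: "{q. fext g f q \<noteq> 0} \<subseteq> g ` {p. f p \<noteq> 0}"
  proof (rule subsetI, rule ccontr)
    fix q assume q: "q \<in> {q. fext g f q \<noteq> 0}" and nq: "q \<notin> g ` {p. f p \<noteq> 0}"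
    have e: "{p. f p \<noteq> 0 \<and> g p = q} = {}" using nq by blast
    have "fext g f q = 0" unfolding fext_def e by simp
    then show False using q by simp
  qed
  have "finite (g ` {p. f p \<noteq> 0})" using f by (auto simp: fgen_def)
  moreover have "g ` {p. f p \<noteq> 0} \<subseteq> carrier M' \<times> carrier N'" using f g by (force simp: fgen_def)
  ultimately show ?thesis using sub unfolding fgen_iff by (meson finite_subset subset_trans)
qed

lemma fext_dlt3:
  fixes M :: "('a, 'm, 'x) bimod_scheme" and N :: "('a, 'n, 'y) bimod_scheme"
  assumes "p \<in> carrier M \<times> carrier N" "q \<in> carrier M \<times> carrier N" "r \<in> carrier M \<times> carrier N"
  shows "fext g (\<lambda>x. dlt p x - dlt q x - dlt r x) = (\<lambda>x. dlt (g p) x - dlt (g q) x - dlt (g r) x)"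
  using fext_diff[OF fgen_diff[OF fgen_dlt fgen_dlt] fgen_dlt, of p M N q r g] fext_diff[OF fgen_dlt fgen_dlt, of p M N q g]
    assms by (simp add: fext_dlt)

lemma fext_trel:
  assumes ok: "tensorable M N" and c: "compatible M N M' N' \<phi> \<psi>" and f: "f \<in> trel M N"
  shows "fext (\<lambda>(m, n). (\<phi> m, \<psi> n)) f \<in> trel M' N'"
  using f
proof (induction rule: trel.induct)
  let ?g = "\<lambda>(m, n). (\<phi> m, \<psi> n)"
  { case zero show ?case by (simp add: fext_zero trel.zero) }
  { case (add f h) show ?case using fext_add[OF trel_fgen[OF ok add.hyps(1)] trel_fgen[OF ok add.hyps(2)], of ?g]
      trel.add[OF add.IH] by simp }
  { case (neg f) show ?case using fext_neg[OF trel_fgen[OF ok neg.hyps], of ?g] trel.neg[OF neg.IH] by simp }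
  { case (gen_l m m' n)
    have "m \<oplus>\<^bsub>M\<^esub> m' \<in> carrier M" using ok gen_l unfolding tensorable_def by (meson abelian_groupE(1))
    then have "fext ?g (\<lambda>p. dlt (m \<oplus>\<^bsub>M\<^esub> m', n) p - dlt (m, n) p - dlt (m', n) p)
        = (\<lambda>q. dlt (\<phi> m \<oplus>\<^bsub>M'\<^esub> \<phi> m', \<psi> n) q - dlt (\<phi> m, \<psi> n) q - dlt (\<phi> m', \<psi> n) q)"
      using fext_dlt3[of "(m \<oplus>\<^bsub>M\<^esub> m', n)" M N "(m, n)" "(m', n)" ?g] compatibleD(3)[OF c] gen_l by simp
    also have "\<dots> \<in> trel M' N'" using gen_l compatibleD[OF c] by (intro trel.gen_l) auto
    finally show ?case . }
  { case (gen_r m n n')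
    have "n \<oplus>\<^bsub>N\<^esub> n' \<in> carrier N" using ok gen_r unfolding tensorable_def by (meson abelian_groupE(1))
    then have "fext ?g (\<lambda>p. dlt (m, n \<oplus>\<^bsub>N\<^esub> n') p - dlt (m, n) p - dlt (m, n') p)
        = (\<lambda>q. dlt (\<phi> m, \<psi> n \<oplus>\<^bsub>N'\<^esub> \<psi> n') q - dlt (\<phi> m, \<psi> n) q - dlt (\<phi> m, \<psi> n') q)"
      using fext_dlt3[of "(m, n \<oplus>\<^bsub>N\<^esub> n')" M N "(m, n)" "(m, n')" ?g] compatibleD(4)[OF c] gen_r by simp
    also have "\<dots> \<in> trel M' N'" using gen_r compatibleD[OF c] by (intro trel.gen_r) auto
    finally show ?case . }
  { case (gen_bal m n a)
    have cc: "ract M m a \<in> carrier M" "lact N a n \<in> carrier N" using ok gen_bal unfolding tensorable_def by auto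
    have "fext ?g (\<lambda>p. dlt (ract M m a, n) p - dlt (m, lact N a n) p)
        = (\<lambda>q. dlt (ract M' (\<phi> m) a, \<psi> n) q - dlt (\<phi> m, lact N' a (\<psi> n)) q)"
      using fext_diff[OF fgen_dlt fgen_dlt, of "(ract M m a, n)" M N "(m, lact N a n)" ?g]
        compatibleD(5,6)[OF c] gen_bal cc by (simp add: fext_dlt)
    also have "\<dots> \<in> trel M' N'" using gen_bal compatibleD[OF c] by (intro trel.gen_bal) auto
    finally show ?case . }
qed

lemma tmap_tcls:
  assumes ok: "tensorable M N" and c: "compatible M N M' N' \<phi> \<psi>" and f: "f \<in> fgen M N"
  shows "tmap M' N' \<phi> \<psi> (tcls M N f) = tcls M' N' (fext (\<lambda>(m, n). (\<phi> m, \<psi> n)) f)"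
proof -
  let ?g = "\<lambda>(m, n). (\<phi> m, \<psi> n)"
  have gc: "\<And>p. p \<in> carrier M \<times> carrier N \<Longrightarrow> ?g p \<in> carrier M' \<times> carrier N'"
    using compatibleD(1,2)[OF c] by auto
  note r = rep_tcls(1,2)[OF f]
  have "fext ?g (\<lambda>p. rep (tcls M N f) p - f p) \<in> trel M' N'" by (rule fext_trel[OF ok c r(2)])
  then have "(\<lambda>q. fext ?g (rep (tcls M N f)) q - fext ?g f q) \<in> trel M' N'"
    using fext_diff[OF r(1) f, of ?g] by simp
  then show ?thesis
    using tcls_eq_iff[OF fext_fgen[OF r(1) gc] fext_fgen[OF f gc]] by (simp add: tmap_def)
qed

lemma tlift_tmk_tcls:
  assumes ok: "tensorable M N" and ok': "tensorable M' N'" and c: "compatible M N M' N' \<phi> \<psi>"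
    and f: "f \<in> fgen M N"
  shows "tlift (tensor M' N') (\<lambda>m n. tmk M' N' (\<phi> m) (\<psi> n)) (tcls M N f)
       = tcls M' N' (fext (\<lambda>(m, n). (\<phi> m, \<psi> n)) f)"
proof -
  let ?g = "\<lambda>(m, n). (\<phi> m, \<psi> n)" and ?S = "{p. f p \<noteq> 0}"
  have gc: "\<And>p. p \<in> carrier M \<times> carrier N \<Longrightarrow> ?g p \<in> carrier M' \<times> carrier N'"
    using compatibleD(1,2)[OF c] by auto
  have S: "finite ?S" "?S \<subseteq> carrier M \<times> carrier N" using f by (auto simp: fgen_def)
  interpret TT: abelian_group "tensor M' N'" by (rule tensor_abelian)
  have b: "balanced M N (tensor M' N') (\<lambda>m n. tmk M' N' (\<phi> m) (\<psi> n))"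
    by (rule balanced_comp[OF balanced_tmk[OF ok'] c])
  have "tlift (tensor M' N') (\<lambda>m n. tmk M' N' (\<phi> m) (\<psi> n)) (tcls M N f)
     = finsum (tensor M' N') (\<lambda>p. [f p] \<cdot>\<^bsub>tensor M' N'\<^esub> tmk M' N' (\<phi> (fst p)) (\<psi> (snd p))) ?S"
    unfolding tlift_tcls[OF b ok f] gensum_def ..
  also have "\<dots> = finsum (tensor M' N') (\<lambda>p. tcls M' N' (\<lambda>q. f p * dlt (?g p) q)) ?S"
  proof (rule TT.finsum_cong')
    show "\<And>p. p \<in> ?S \<Longrightarrow> [f p] \<cdot>\<^bsub>tensor M' N'\<^esub> tmk M' N' (\<phi> (fst p)) (\<psi> (snd p))
        = tcls M' N' (\<lambda>q. f p * dlt (?g p) q)"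
      using S gc by (auto simp: tmk_def split_beta intro!: tensor_pow fgen_dlt)
    show "(\<lambda>p. tcls M' N' (\<lambda>q. f p * dlt (?g p) q)) \<in> ?S \<rightarrow> carrier (tensor M' N')"
      using S gc by (auto intro!: tcls_carrier fgen_scale fgen_dlt)
  qed simp
  also have "\<dots> = tcls M' N' (\<lambda>q. \<Sum>p\<in>?S. f p * dlt (?g p) q)"
    using S gc by (intro tensor_finsum) (auto intro!: fgen_scale fgen_dlt)
  also have "\<dots> = tcls M' N' (fext ?g f)" using fext_superset[OF S(1), of f ?g] by simp
  finally show ?thesis .
qed

lemma tmap_tlift:
  assumes ok: "tensorable M N" and ok': "tensorable M' N'" and c: "compatible M N M' N' \<phi> \<psi>"
    and X: "X \<in> carrier (tensor M N)"
  shows "tmap M' N' \<phi> \<psi> X = tlift (tensor M' N') (\<lambda>m n. tmk M' N' (\<phi> m) (\<psi> n)) X"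
proof -
  obtain f where "f \<in> fgen M N" "X = tcls M N f" using X by (auto simp: tensor_carrier)
  then show ?thesis using tmap_tcls[OF ok c] tlift_tmk_tcls[OF ok ok' c] by simp
qed

lemma tmap_closed:
  assumes ok: "tensorable M N" and ok': "tensorable M' N'" and c: "compatible M N M' N' \<phi> \<psi>"
    and X: "X \<in> carrier (tensor M N)"
  shows "tmap M' N' \<phi> \<psi> X \<in> carrier (tensor M' N')"
  unfolding tmap_tlift[OF ok ok' c X]
  by (rule tlift_closed[OF tensor_abelian balanced_closed[OF balanced_comp[OF balanced_tmk[OF ok'] c]] X])

lemma tmap_tmk:
  assumes ok: "tensorable M N" and ok': "tensorable M' N'" and c: "compatible M N M' N' \<phi> \<psi>"
    and m: "m \<in> carrier M" and n: "n \<in> carrier N"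
  shows "tmap M' N' \<phi> \<psi> (tmk M N m n) = tmk M' N' (\<phi> m) (\<psi> n)"
  unfolding tmap_tlift[OF ok ok' c tmk_carrier[OF m n]]
  by (rule tlift_tmk[OF balanced_comp[OF balanced_tmk[OF ok'] c] ok m n])

lemma addhom_tmap:
  assumes ok: "tensorable M N" and ok': "tensorable M' N'" and c: "compatible M N M' N' \<phi> \<psi>"
  shows "addhom (tensor M N) (tensor M' N') (tmap M' N' \<phi> \<psi>)"
proof -
  have "addhom (tensor M N) (tensor M' N') (tlift (tensor M' N') (\<lambda>m n. tmk M' N' (\<phi> m) (\<psi> n)))"
    by (rule addhom_tlift[OF balanced_comp[OF balanced_tmk[OF ok'] c] ok])
  then show ?thesis unfolding addhom_def using tmap_tlift[OF ok ok' c] by (simp add: tensor_abelian abelian_groupE(1))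
qed

lemma tlift_tmap:
  assumes ok: "tensorable M N" and ok': "tensorable M' N'" and c: "compatible M N M' N' \<phi> \<psi>"
    and b: "balanced M' N' T \<beta>" and X: "X \<in> carrier (tensor M N)"
  shows "tlift T \<beta> (tmap M' N' \<phi> \<psi> X) = tlift T (\<lambda>m n. \<beta> (\<phi> m) (\<psi> n)) X"
proof (rule tensor_hom_ext[OF balancedD(1)[OF b] _ _ _ X])
  show "addhom (tensor M N) T (\<lambda>X. tlift T \<beta> (tmap M' N' \<phi> \<psi> X))"
    by (rule addhom_comp[OF addhom_tmap[OF ok ok' c] addhom_tlift[OF b ok']])
  show "addhom (tensor M N) T (tlift T (\<lambda>m n. \<beta> (\<phi> m) (\<psi> n)))"
    by (rule addhom_tlift[OF balanced_comp[OF b c] ok])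
  fix m n assume m: "m \<in> carrier M" and n: "n \<in> carrier N"
  show "tlift T \<beta> (tmap M' N' \<phi> \<psi> (tmk M N m n)) = tlift T (\<lambda>m n. \<beta> (\<phi> m) (\<psi> n)) (tmk M N m n)"
    using tmap_tmk[OF ok ok' c m n] tlift_tmk[OF b ok'] tlift_tmk[OF balanced_comp[OF b c] ok m n] compatibleD(1,2)[OF c] m n
    by simp
qed

lemma tmap_comp:
  assumes ok: "tensorable M N" and ok': "tensorable M' N'" and ok'': "tensorable M'' N''"
    and c: "compatible M N M' N' \<phi> \<psi>" and c': "compatible M' N' M'' N'' \<phi>' \<psi>'"
    and X: "X \<in> carrier (tensor M N)"
  shows "tmap M'' N'' \<phi>' \<psi>' (tmap M' N' \<phi> \<psi> X) = tmap M'' N'' (\<lambda>m. \<phi>' (\<phi> m)) (\<lambda>n. \<psi>' (\<psi> n)) X"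
  using tmap_tlift[OF ok' ok'' c' tmap_closed[OF ok ok' c X]]
    tlift_tmap[OF ok ok' c balanced_comp[OF balanced_tmk[OF ok''] c'] X]
    tmap_tlift[OF ok ok'' compatible_comp[OF c c'] X] by simp

lemma tmap_cong:
  assumes ok: "tensorable M N" and ok': "tensorable M' N'" and c: "compatible M N M' N' \<phi> \<psi>"
    and c2: "compatible M N M' N' \<phi>2 \<psi>2"
    and e1: "\<And>m. m \<in> carrier M \<Longrightarrow> \<phi> m = \<phi>2 m" and e2: "\<And>n. n \<in> carrier N \<Longrightarrow> \<psi> n = \<psi>2 n"
    and X: "X \<in> carrier (tensor M N)"
  shows "tmap M' N' \<phi> \<psi> X = tmap M' N' \<phi>2 \<psi>2 X"
  unfolding tmap_tlift[OF ok ok' c X] tmap_tlift[OF ok ok' c2 X]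
  by (rule tlift_cong[OF tensor_abelian balanced_closed[OF balanced_comp[OF balanced_tmk[OF ok'] c]] _ X]) (simp add: e1 e2)

lemma tmap_id:
  assumes ok: "tensorable M N" and X: "X \<in> carrier (tensor M N)"
  shows "tmap M N id id X = X"
proof (rule tensor_hom_ext[OF tensor_abelian _ _ _ X])
  show "addhom (tensor M N) (tensor M N) (tmap M N id id)" by (rule addhom_tmap[OF ok ok compatible_id[OF ok]])
  show "addhom (tensor M N) (tensor M N) (\<lambda>x. x)" by (rule addhomI) (auto simp: tensor_abelian abelian_groupE(1))
  fix m n assume "m \<in> carrier M" "n \<in> carrier N"
  then show "tmap M N id id (tmk M N m n) = tmk M N m n" using tmap_tmk[OF ok ok compatible_id[OF ok]] by simp
qed

lemma tensor_ract: "ract (tensor M N) X a = tmap M N id (\<lambda>n. ract N n a) X"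
  by (simp add: tensor_def tmap_def)

lemma tensor_lact: "lact (tensor M N) a X = tmap M N (lact M a) id X"
  by (simp add: tensor_def tmap_def)

locale bimod_ctx =
  fixes C :: "('a::ring_1, 'c) bimod"
  assumes bimodule_C: "bimodule C"
begin

lemma rmod_C: "rmod C" using bimodule_C by (simp add: bimodule_def)
lemma lmod_C: "lmod C" using bimodule_C by (simp add: bimodule_def)
lemma abelian_C: "abelian_group C" using rmodD(1)[OF rmod_C] .
lemma bimodule_comm: "c \<in> carrier C \<Longrightarrow> ract C (lact C a c) b = lact C a (ract C c b)"
  using bimodule_C by (simp add: bimodule_def)

lemma tensorable_CC: "tensorable C C"
  using rmodD(1,2)[OF rmod_C] lmodD(2)[OF lmod_C] by (simp add: tensorable_def)

lemma tensorable_NC: "rmod N \<Longrightarrow> tensorable N C"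
  using rmodD(1,2)[of N] lmodD(2)[OF lmod_C] abelian_C by (simp add: tensorable_def)

lemma balanced_tmk_CC: "balanced C C (tensor C C) (tmk C C)"
  by (rule balanced_tmk[OF tensorable_CC])

lemma compatible_lact: "compatible C C C C (lact C a) id"
  using lmodD[OF lmod_C] rmodD(2)[OF rmod_C] bimodule_comm by (intro compatibleI) auto

lemma compatible_ract: "compatible N C N C id (\<lambda>c. ract C c a)"
  using rmodD[OF rmod_C] bimodule_comm by (intro compatibleI) auto

lemma lact_CC_tmk:
  "x \<in> carrier C \<Longrightarrow> y \<in> carrier C \<Longrightarrow> lact (tensor C C) a (tmk C C x y) = tmk C C (lact C a x) y"
  unfolding tensor_lact using tmap_tmk[OF tensorable_CC tensorable_CC compatible_lact] by simp

lemma lact_CC_closed: "X \<in> carrier (tensor C C) \<Longrightarrow> lact (tensor C C) a X \<in> carrier (tensor C C)"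
  unfolding tensor_lact by (rule tmap_closed[OF tensorable_CC tensorable_CC compatible_lact])

lemma ract_tmk:
  "rmod N \<Longrightarrow> x \<in> carrier N \<Longrightarrow> y \<in> carrier C \<Longrightarrow> ract (tensor N C) (tmk N C x y) a = tmk N C x (ract C y a)"
  unfolding tensor_ract using tmap_tmk[OF tensorable_NC tensorable_NC compatible_ract] by simp

lemma ract_closed: "rmod N \<Longrightarrow> X \<in> carrier (tensor N C) \<Longrightarrow> ract (tensor N C) X a \<in> carrier (tensor N C)"
  unfolding tensor_ract by (rule tmap_closed[OF tensorable_NC tensorable_NC compatible_ract])

lemma tensorable_NCC: "rmod N \<Longrightarrow> tensorable N (tensor C C)"
  using rmodD(1,2)[of N] lact_CC_closed tensor_abelian by (simp add: tensorable_def)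

lemma tensorable_NC_C: "rmod N \<Longrightarrow> tensorable (tensor N C) C"
  using ract_closed[of N] lmodD(2)[OF lmod_C] abelian_C tensor_abelian by (simp add: tensorable_def)

lemma tmk_bal:
  assumes N: "rmod N" and x: "x \<in> carrier N" and c: "c \<in> carrier C"
  shows "tmk N C (ract N x a) c = tmk N C x (lact C a c)"
  by (rule balancedD(5)[OF balanced_tmk[OF tensorable_NC[OF N]] x c])

lemma addhom_tmk_left:
  assumes N: "rmod N" and c: "c \<in> carrier C"
  shows "addhom N (tensor N C) (\<lambda>x. tmk N C x c)"
  using balancedD(3)[OF balanced_tmk[OF tensorable_NC[OF N]] _ _ c] by (intro addhomI) (auto intro: tmk_carrier c)

lemma addhom_ract: "rmod N \<Longrightarrow> addhom N N (\<lambda>x. ract N x a)"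
  by (rule addhomI) (auto simp: rmodD(2,3))

lemma addhom_ract_tensor: "rmod N \<Longrightarrow> addhom (tensor N C) (tensor N C) (\<lambda>X. ract (tensor N C) X a)"
  unfolding tensor_ract by (rule addhom_tmap[OF tensorable_NC tensorable_NC compatible_ract])

lemma compatible_rhom: "rhom M N f \<Longrightarrow> compatible M C N C f id"
  using rhomD[of M N f] by (intro compatibleI) auto

lemma compatible_rhom_CC: "rhom M N f \<Longrightarrow> compatible M (tensor C C) N (tensor C C) f id"
  using rhomD[of M N f] by (intro compatibleI) auto

text \<open>\<open>f \<otimes> C\<close> is right A-linear (the right action on \<open>N \<otimes> C\<close> comes from C).\<close>

lemma tmap_ract:
  assumes M: "rmod M" and N: "rmod N" and c: "compatible M C N C \<phi> id" and X: "X \<in> carrier (tensor M C)"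
  shows "tmap N C \<phi> id (ract (tensor M C) X a) = ract (tensor N C) (tmap N C \<phi> id X) a"
proof (rule tensor_hom_ext[OF tensor_abelian _ _ _ X])
  show "addhom (tensor M C) (tensor N C) (\<lambda>X. tmap N C \<phi> id (ract (tensor M C) X a))"
    by (rule addhom_comp[OF addhom_ract_tensor[OF M] addhom_tmap[OF tensorable_NC[OF M] tensorable_NC[OF N] c]])
  show "addhom (tensor M C) (tensor N C) (\<lambda>X. ract (tensor N C) (tmap N C \<phi> id X) a)"
    by (rule addhom_comp[OF addhom_tmap[OF tensorable_NC[OF M] tensorable_NC[OF N] c] addhom_ract_tensor[OF N]])
  fix m n assume m: "m \<in> carrier M" and n: "n \<in> carrier C"
  have rn: "ract C n a \<in> carrier C" using rmodD(2)[OF rmod_C n] .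
  show "tmap N C \<phi> id (ract (tensor M C) (tmk M C m n) a) = ract (tensor N C) (tmap N C \<phi> id (tmk M C m n)) a"
    using ract_tmk[OF M m n] tmap_tmk[OF tensorable_NC[OF M] tensorable_NC[OF N] c m rn]
      tmap_tmk[OF tensorable_NC[OF M] tensorable_NC[OF N] c m n] ract_tmk[OF N compatibleD(1)[OF c m] n]
    by simp
qed

lemma compatible_tmap:
  assumes M: "rmod M" and N: "rmod N" and c: "compatible M C N C \<phi> id"
  shows "compatible (tensor M C) C (tensor N C) C (tmap N C \<phi> id) id"
  using tmap_closed[OF tensorable_NC[OF M] tensorable_NC[OF N] c]
    addhomD(2)[OF addhom_tmap[OF tensorable_NC[OF M] tensorable_NC[OF N] c]]
    tmap_ract[OF M N c] by (intro compatibleI) auto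

text \<open>An (A,A)-linear map \<open>\<phi> : C \<rightarrow> A\<close> (the counit \<open>\<epsilon>\<close>, or \<open>c \<mapsto> \<delta>(e \<otimes> c)\<close>) induces
  \<open>lmult \<phi> : C \<otimes> C \<rightarrow> C, x \<otimes> y \<mapsto> \<phi>(x) y\<close> and \<open>rmult N \<phi> : N \<otimes> C \<rightarrow> N, n \<otimes> c \<mapsto> n \<phi>(c)\<close>.
  The counit axioms, the map \<open>\<kappa>\<^sub>M\<close> and the coaction counit are all of this shape.\<close>

definition lmult :: "('c \<Rightarrow> 'a) \<Rightarrow> ('c \<times> 'c \<Rightarrow> int) set \<Rightarrow> 'c" where
  "lmult \<phi> = tlift C (\<lambda>x y. lact C (\<phi> x) y)"

definition rmult :: "('a, 'n) bimod \<Rightarrow> ('c \<Rightarrow> 'a) \<Rightarrow> ('n \<times> 'c \<Rightarrow> int) set \<Rightarrow> 'n" where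
  "rmult N \<phi> = tlift N (\<lambda>x c. ract N x (\<phi> c))"

lemma balanced_lmult:
  assumes \<phi>: "bihomA C \<phi>"
  shows "balanced C C C (\<lambda>x y. lact C (\<phi> x) y)"
proof (rule balancedI)
  show "abelian_group C" by (rule abelian_C)
qed (simp_all add: lmodD(2,3,4,5)[OF lmod_C] bihomAD(1,3)[OF \<phi>])

lemma lmult_closed: "bihomA C \<phi> \<Longrightarrow> X \<in> carrier (tensor C C) \<Longrightarrow> lmult \<phi> X \<in> carrier C"
  unfolding lmult_def by (rule tlift_closed[OF abelian_C balanced_closed[OF balanced_lmult]])

lemma lmult_tmk: "bihomA C \<phi> \<Longrightarrow> x \<in> carrier C \<Longrightarrow> y \<in> carrier C \<Longrightarrow> lmult \<phi> (tmk C C x y) = lact C (\<phi> x) y"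
  unfolding lmult_def by (rule tlift_tmk[OF balanced_lmult tensorable_CC])

lemma lmult_lact:
  assumes \<phi>: "bihomA C \<phi>" and X: "X \<in> carrier (tensor C C)"
  shows "lmult \<phi> (lact (tensor C C) a X) = lact C a (lmult \<phi> X)"
  unfolding lmult_def
proof (rule tensor_hom_ext[OF abelian_C _ _ _ X])
  show "addhom (tensor C C) C (\<lambda>X. tlift C (\<lambda>x y. lact C (\<phi> x) y) (lact (tensor C C) a X))"
    unfolding tensor_lact
    by (rule addhom_comp[OF addhom_tmap[OF tensorable_CC tensorable_CC compatible_lact]
          addhom_tlift[OF balanced_lmult[OF \<phi>] tensorable_CC]])
  show "addhom (tensor C C) C (\<lambda>X. lact C a (tlift C (\<lambda>x y. lact C (\<phi> x) y) X))"
    by (rule addhom_comp[OF addhom_tlift[OF balanced_lmult[OF \<phi>] tensorable_CC]])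
      (use lmodD[OF lmod_C] in \<open>auto intro!: addhomI\<close>)
  fix m c assume m: "m \<in> carrier C" and c: "c \<in> carrier C"
  show "tlift C (\<lambda>x y. lact C (\<phi> x) y) (lact (tensor C C) a (tmk C C m c))
      = lact C a (tlift C (\<lambda>x y. lact C (\<phi> x) y) (tmk C C m c))"
    using lact_CC_tmk[OF m c] tlift_tmk[OF balanced_lmult[OF \<phi>] tensorable_CC] m c lmodD(2,5)[OF lmod_C]
      bihomAD(2)[OF \<phi>] by simp
qed

lemma compatible_lmult:
  assumes \<phi>: "bihomA C \<phi>"
  shows "compatible N (tensor C C) N C id (lmult \<phi>)"
proof (rule compatibleI)
  show "\<And>X Y. X \<in> carrier (tensor C C) \<Longrightarrow> Y \<in> carrier (tensor C C) \<Longrightarrow>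
      lmult \<phi> (X \<oplus>\<^bsub>tensor C C\<^esub> Y) = lmult \<phi> X \<oplus>\<^bsub>C\<^esub> lmult \<phi> Y"
    unfolding lmult_def by (rule tlift_add[OF balanced_lmult[OF \<phi>] tensorable_CC])
qed (simp_all add: lmult_closed[OF \<phi>] lmult_lact[OF \<phi>])

lemma balanced_rmult:
  assumes \<phi>: "bihomA C \<phi>" and N: "rmod N"
  shows "balanced N C N (\<lambda>x c. ract N x (\<phi> c))"
proof (rule balancedI)
  show "abelian_group N" by (rule rmodD(1)[OF N])
qed (simp_all add: rmodD(2,3,4,5)[OF N] bihomAD(1,2)[OF \<phi>])

lemma rmult_closed: "bihomA C \<phi> \<Longrightarrow> rmod N \<Longrightarrow> X \<in> carrier (tensor N C) \<Longrightarrow> rmult N \<phi> X \<in> carrier N"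
  unfolding rmult_def by (rule tlift_closed[OF rmodD(1) balanced_closed[OF balanced_rmult]])

lemma rmult_add:
  "bihomA C \<phi> \<Longrightarrow> rmod N \<Longrightarrow> X \<in> carrier (tensor N C) \<Longrightarrow> Y \<in> carrier (tensor N C) \<Longrightarrow>
    rmult N \<phi> (X \<oplus>\<^bsub>tensor N C\<^esub> Y) = rmult N \<phi> X \<oplus>\<^bsub>N\<^esub> rmult N \<phi> Y"
  unfolding rmult_def by (rule tlift_add[OF balanced_rmult tensorable_NC])

lemma rmult_ract:
  assumes \<phi>: "bihomA C \<phi>" and N: "rmod N" and X: "X \<in> carrier (tensor N C)"
  shows "rmult N \<phi> (ract (tensor N C) X a) = ract N (rmult N \<phi> X) a"
  unfolding rmult_def
proof (rule tensor_hom_ext[OF rmodD(1)[OF N] _ _ _ X])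
  show "addhom (tensor N C) N (\<lambda>X. tlift N (\<lambda>x c. ract N x (\<phi> c)) (ract (tensor N C) X a))"
    by (rule addhom_comp[OF addhom_ract_tensor[OF N] addhom_tlift[OF balanced_rmult[OF \<phi> N] tensorable_NC[OF N]]])
  show "addhom (tensor N C) N (\<lambda>X. ract N (tlift N (\<lambda>x c. ract N x (\<phi> c)) X) a)"
    by (rule addhom_comp[OF addhom_tlift[OF balanced_rmult[OF \<phi> N] tensorable_NC[OF N]] addhom_ract[OF N]])
  fix m c assume m: "m \<in> carrier N" and c: "c \<in> carrier C"
  show "tlift N (\<lambda>x c. ract N x (\<phi> c)) (ract (tensor N C) (tmk N C m c) a)
      = ract N (tlift N (\<lambda>x c. ract N x (\<phi> c)) (tmk N C m c)) a"
    using ract_tmk[OF N m c] tlift_tmk[OF balanced_rmult[OF \<phi> N] tensorable_NC[OF N]] m c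
      rmodD(2)[OF rmod_C] rmodD(5)[OF N] bihomAD(3)[OF \<phi>] by simp
qed

lemma compatible_rmult: "bihomA C \<phi> \<Longrightarrow> rmod N \<Longrightarrow> compatible (tensor N C) C N C (rmult N \<phi>) id"
  using rmult_closed rmult_add rmult_ract by (intro compatibleI) auto

lemma rhom_rmult_comp:
  assumes \<phi>: "bihomA C \<phi>" and M: "rmod M" and N: "rmod N" and g: "rhom M (tensor N C) g"
  shows "rhom M N (\<lambda>x. rmult N \<phi> (g x))"
  using rhomD[OF g] rmult_closed[OF \<phi> N] rmult_add[OF \<phi> N] rmult_ract[OF \<phi> N] by (intro rhomI) auto

lemma rmult_natural:
  assumes \<phi>: "bihomA C \<phi>" and M: "rmod M" and N: "rmod N" and f: "rhom M N f"
    and X: "X \<in> carrier (tensor M C)"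
  shows "rmult N \<phi> (tmap N C f id X) = f (rmult M \<phi> X)"
proof -
  have cf: "compatible M C N C f id" by (rule compatible_rhom[OF f])
  have "rmult N \<phi> (tmap N C f id X) = tlift N (\<lambda>x c. ract N (f x) (\<phi> (id c))) X"
    unfolding rmult_def
    by (rule tlift_tmap[OF tensorable_NC[OF M] tensorable_NC[OF N] cf balanced_rmult[OF \<phi> N] X])
  also have "\<dots> = tlift N (\<lambda>x c. f (ract M x (\<phi> c))) X"
    by (rule tlift_cong[OF rmodD(1)[OF N] balanced_closed[OF balanced_comp[OF balanced_rmult[OF \<phi> N] cf]] _ X])
      (simp add: rhomD(3)[OF f])
  also have "\<dots> = f (rmult M \<phi> X)"
    unfolding rmult_def
    by (rule tlift_hom[OF rmodD(1)[OF M] rmodD(1)[OF N] rhom_addhom[OF f]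
          balanced_closed[OF balanced_rmult[OF \<phi> M]] X, symmetric])
  finally show ?thesis .
qed

lemma rmult_tmap_right:
  assumes \<phi>: "bihomA C \<phi>" and N: "rmod N" and \<chi>: "compatible N C N C id \<chi>"
    and X: "X \<in> carrier (tensor N C)"
  shows "rmult N \<phi> (tmap N C id \<chi> X) = tlift N (\<lambda>x c. ract N x (\<phi> (\<chi> c))) X"
  unfolding rmult_def
  using tlift_tmap[OF tensorable_NC[OF N] tensorable_NC[OF N] \<chi> balanced_rmult[OF \<phi> N] X] by simp

text \<open>\<open>tassoc\<close> is defined by two nested lifts: for fixed \<open>p \<in> C\<close> the inner map sends
  \<open>n \<otimes> c\<close> to \<open>n \<otimes> (c \<otimes> p)\<close>, and the outer one sends \<open>x \<otimes> p\<close> to the inner map applied to x.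
  We show both are balanced, so that \<open>tassoc ((n \<otimes> c) \<otimes> p) = n \<otimes> (c \<otimes> p)\<close>.\<close>

definition assoc_inner :: "('a, 'n) bimod \<Rightarrow> 'c \<Rightarrow> 'n \<Rightarrow> 'c \<Rightarrow> ('n \<times> ('c \<times> 'c \<Rightarrow> int) set \<Rightarrow> int) set" where
  "assoc_inner N p = (\<lambda>m n. tmk N (tensor C C) m (tmk C C n p))"

definition assoc_outer :: "('a, 'n) bimod \<Rightarrow> ('n \<times> 'c \<Rightarrow> int) set \<Rightarrow> 'c \<Rightarrow> ('n \<times> ('c \<times> 'c \<Rightarrow> int) set \<Rightarrow> int) set" where
  "assoc_outer N = (\<lambda>x p. tlift (tensor N (tensor C C)) (assoc_inner N p) x)"

lemma tassoc_as_tlift: "tassoc N C C Y = tlift (tensor N (tensor C C)) (assoc_outer N) Y"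
  by (simp add: tassoc_def assoc_outer_def assoc_inner_def)

lemma balanced_assoc_inner:
  assumes N: "rmod N" and p: "p \<in> carrier C"
  shows "balanced N C (tensor N (tensor C C)) (assoc_inner N p)"
proof (rule balancedI)
  note b = balanced_tmk[OF tensorable_NCC[OF N]]
  show "abelian_group (tensor N (tensor C C))" by (rule tensor_abelian)
  show "\<And>m n. m \<in> carrier N \<Longrightarrow> n \<in> carrier C \<Longrightarrow> assoc_inner N p m n \<in> carrier (tensor N (tensor C C))"
    unfolding assoc_inner_def using p by (intro tmk_carrier) auto
  show "\<And>m m' n. m \<in> carrier N \<Longrightarrow> m' \<in> carrier N \<Longrightarrow> n \<in> carrier C \<Longrightarrow>
      assoc_inner N p (m \<oplus>\<^bsub>N\<^esub> m') n = assoc_inner N p m n \<oplus>\<^bsub>tensor N (tensor C C)\<^esub> assoc_inner N p m' n"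
    unfolding assoc_inner_def using p by (intro balancedD(3)[OF b] tmk_carrier) auto
  show "\<And>m n n'. m \<in> carrier N \<Longrightarrow> n \<in> carrier C \<Longrightarrow> n' \<in> carrier C \<Longrightarrow>
      assoc_inner N p m (n \<oplus>\<^bsub>C\<^esub> n') = assoc_inner N p m n \<oplus>\<^bsub>tensor N (tensor C C)\<^esub> assoc_inner N p m n'"
    unfolding assoc_inner_def
    using p balancedD(3)[OF balanced_tmk_CC] balancedD(4)[OF b _ tmk_carrier tmk_carrier] by simp
  show "\<And>m n a. m \<in> carrier N \<Longrightarrow> n \<in> carrier C \<Longrightarrow> assoc_inner N p (ract N m a) n = assoc_inner N p m (lact C a n)"
    unfolding assoc_inner_def using p balancedD(5)[OF b _ tmk_carrier] lact_CC_tmk by simp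
qed

lemma addhom_assoc_outer:
  "rmod N \<Longrightarrow> p \<in> carrier C \<Longrightarrow> addhom (tensor N C) (tensor N (tensor C C)) (\<lambda>x. assoc_outer N x p)"
  unfolding assoc_outer_def by (rule addhom_tlift[OF balanced_assoc_inner tensorable_NC])

lemma assoc_outer_tmk:
  "rmod N \<Longrightarrow> m \<in> carrier N \<Longrightarrow> n \<in> carrier C \<Longrightarrow> p \<in> carrier C \<Longrightarrow>
    assoc_outer N (tmk N C m n) p = tmk N (tensor C C) m (tmk C C n p)"
  unfolding assoc_outer_def using tlift_tmk[OF balanced_assoc_inner tensorable_NC] by (simp add: assoc_inner_def)

lemma assoc_outer_add_right:
  assumes N: "rmod N" and x: "x \<in> carrier (tensor N C)" and p: "p \<in> carrier C" and p': "p' \<in> carrier C"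
  shows "assoc_outer N x (p \<oplus>\<^bsub>C\<^esub> p') = assoc_outer N x p \<oplus>\<^bsub>tensor N (tensor C C)\<^esub> assoc_outer N x p'"
proof (rule tensor_hom_ext[OF tensor_abelian _ _ _ x])
  have pp: "p \<oplus>\<^bsub>C\<^esub> p' \<in> carrier C" using p p' abelian_C by (simp add: abelian_groupE(1))
  show "addhom (tensor N C) (tensor N (tensor C C)) (\<lambda>x. assoc_outer N x (p \<oplus>\<^bsub>C\<^esub> p'))"
    by (rule addhom_assoc_outer[OF N pp])
  show "addhom (tensor N C) (tensor N (tensor C C))
      (\<lambda>x. assoc_outer N x p \<oplus>\<^bsub>tensor N (tensor C C)\<^esub> assoc_outer N x p')"
    by (rule addhom_add[OF tensor_abelian addhom_assoc_outer[OF N p] addhom_assoc_outer[OF N p']])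
  fix m n assume m: "m \<in> carrier N" and n: "n \<in> carrier C"
  show "assoc_outer N (tmk N C m n) (p \<oplus>\<^bsub>C\<^esub> p')
      = assoc_outer N (tmk N C m n) p \<oplus>\<^bsub>tensor N (tensor C C)\<^esub> assoc_outer N (tmk N C m n) p'"
    using assoc_outer_tmk[OF N m n] pp p p' balancedD(4)[OF balanced_tmk_CC n p p']
      balancedD(4)[OF balanced_tmk[OF tensorable_NCC[OF N]] m tmk_carrier tmk_carrier] n
    by simp
qed

lemma assoc_outer_bal:
  assumes N: "rmod N" and x: "x \<in> carrier (tensor N C)" and p: "p \<in> carrier C"
  shows "assoc_outer N (ract (tensor N C) x a) p = assoc_outer N x (lact C a p)"
proof -
  have "assoc_outer N (ract (tensor N C) x a) p
      = tlift (tensor N (tensor C C)) (\<lambda>m n. assoc_inner N p (id m) (ract C n a)) x"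
    unfolding assoc_outer_def tensor_ract
    by (rule tlift_tmap[OF tensorable_NC[OF N] tensorable_NC[OF N] compatible_ract balanced_assoc_inner[OF N p] x])
  also have "\<dots> = tlift (tensor N (tensor C C)) (assoc_inner N (lact C a p)) x"
  proof (rule tlift_cong[OF tensor_abelian balanced_closed[OF balanced_comp[OF balanced_assoc_inner[OF N p]
          compatible_ract]] _ x])
    fix m n assume m: "m \<in> carrier N" and n: "n \<in> carrier C"
    show "assoc_inner N p (id m) (ract C n a) = assoc_inner N (lact C a p) m n"
      unfolding assoc_inner_def using balancedD(5)[OF balanced_tmk_CC n p] by simp
  qed
  finally show ?thesis unfolding assoc_outer_def .
qed

lemma balanced_assoc_outer:
  assumes N: "rmod N"
  shows "balanced (tensor N C) C (tensor N (tensor C C)) (assoc_outer N)"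
proof (rule balancedI)
  show "\<And>x x' p. x \<in> carrier (tensor N C) \<Longrightarrow> x' \<in> carrier (tensor N C) \<Longrightarrow> p \<in> carrier C \<Longrightarrow>
      assoc_outer N (x \<oplus>\<^bsub>tensor N C\<^esub> x') p = assoc_outer N x p \<oplus>\<^bsub>tensor N (tensor C C)\<^esub> assoc_outer N x' p"
    using addhomD(2)[OF addhom_assoc_outer[OF N]] by blast
qed (use addhomD(1)[OF addhom_assoc_outer[OF N]] assoc_outer_add_right[OF N] assoc_outer_bal[OF N]
  in \<open>auto intro: tensor_abelian\<close>)

lemma tassoc_tmk:
  assumes N: "rmod N" and x: "x \<in> carrier (tensor N C)" and p: "p \<in> carrier C"
  shows "tassoc N C C (tmk (tensor N C) C x p) = tlift (tensor N (tensor C C)) (assoc_inner N p) x"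
  using tlift_tmk[OF balanced_assoc_outer[OF N] tensorable_NC_C[OF N] x p]
  unfolding tassoc_as_tlift assoc_outer_def by simp

lemma addhom_tassoc:
  assumes N: "rmod N"
  shows "addhom (tensor (tensor N C) C) (tensor N (tensor C C)) (tassoc N C C)"
  unfolding tassoc_as_tlift
  using addhom_tlift[OF balanced_assoc_outer[OF N] tensorable_NC_C[OF N]] by (simp add: addhom_def)

lemma tassoc_natural:
  assumes M: "rmod M" and N: "rmod N" and c: "compatible M C N C \<phi> id"
    and Y: "Y \<in> carrier (tensor (tensor M C) C)"
  shows "tassoc N C C (tmap (tensor N C) C (tmap N C \<phi> id) id Y) = tmap N (tensor C C) \<phi> id (tassoc M C C Y)"
proof (rule tensor_hom_ext[OF tensor_abelian _ _ _ Y])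
  have cCC: "compatible M (tensor C C) N (tensor C C) \<phi> id"
    using compatibleD[OF c] by (intro compatibleI) auto
  show "addhom (tensor (tensor M C) C) (tensor N (tensor C C)) (\<lambda>Y. tassoc N C C (tmap (tensor N C) C (tmap N C \<phi> id) id Y))"
    by (rule addhom_comp[OF addhom_tmap[OF tensorable_NC_C[OF M] tensorable_NC_C[OF N] compatible_tmap[OF M N c]] addhom_tassoc[OF N]])
  show "addhom (tensor (tensor M C) C) (tensor N (tensor C C)) (\<lambda>Y. tmap N (tensor C C) \<phi> id (tassoc M C C Y))"
    by (rule addhom_comp[OF addhom_tassoc[OF M] addhom_tmap[OF tensorable_NCC[OF M] tensorable_NCC[OF N] cCC]])
  fix x p assume x: "x \<in> carrier (tensor M C)" and p: "p \<in> carrier C"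
  have tx: "tmap N C \<phi> id x \<in> carrier (tensor N C)" by (rule tmap_closed[OF tensorable_NC[OF M] tensorable_NC[OF N] c x])
  have "tassoc N C C (tmap (tensor N C) C (tmap N C \<phi> id) id (tmk (tensor M C) C x p))
      = tlift (tensor N (tensor C C)) (assoc_inner N p) (tmap N C \<phi> id x)"
    using tmap_tmk[OF tensorable_NC_C[OF M] tensorable_NC_C[OF N] compatible_tmap[OF M N c] x p] tassoc_tmk[OF N tx p] by simp
  also have "\<dots> = tlift (tensor N (tensor C C)) (\<lambda>m n. assoc_inner N p (\<phi> m) (id n)) x"
    by (rule tlift_tmap[OF tensorable_NC[OF M] tensorable_NC[OF N] c balanced_assoc_inner[OF N p] x])
  also have "\<dots> = tlift (tensor N (tensor C C)) (\<lambda>m n. tmap N (tensor C C) \<phi> id (assoc_inner M p m n)) x"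
  proof (rule tlift_cong[OF tensor_abelian balanced_closed[OF balanced_comp[OF balanced_assoc_inner[OF N p] c]] _ x])
    fix m n assume m: "m \<in> carrier M" and n: "n \<in> carrier C"
    show "assoc_inner N p (\<phi> m) (id n) = tmap N (tensor C C) \<phi> id (assoc_inner M p m n)"
      unfolding assoc_inner_def using tmap_tmk[OF tensorable_NCC[OF M] tensorable_NCC[OF N] cCC m tmk_carrier[OF n p]] by simp
  qed
  also have "\<dots> = tmap N (tensor C C) \<phi> id (tlift (tensor M (tensor C C)) (assoc_inner M p) x)"
    by (rule tlift_hom[OF tensor_abelian tensor_abelian addhom_tmap[OF tensorable_NCC[OF M] tensorable_NCC[OF N] cCC]
          balanced_closed[OF balanced_assoc_inner[OF M p]] x, symmetric])
  also have "\<dots> = tmap N (tensor C C) \<phi> id (tassoc M C C (tmk (tensor M C) C x p))"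
    using tassoc_tmk[OF M x p] by simp
  finally show "tassoc N C C (tmap (tensor N C) C (tmap N C \<phi> id) id (tmk (tensor M C) C x p)) =
      tmap N (tensor C C) \<phi> id (tassoc M C C (tmk (tensor M C) C x p))" .
qed

text \<open>The key compatibility of \<open>lmult\<close>, \<open>rmult\<close> and associativity:
  \<open>(N \<otimes> lmult \<phi>) \<circ> tassoc = rmult N \<phi> \<otimes> C\<close> on \<open>(N \<otimes> C) \<otimes> C\<close>,
  both sides sending \<open>(n \<otimes> c) \<otimes> p\<close> to \<open>n \<otimes> \<phi>(c) p = n \<phi>(c) \<otimes> p\<close>.\<close>

lemma rmult_assoc:
  assumes \<phi>: "bihomA C \<phi>" and M: "rmod M" and Y: "Y \<in> carrier (tensor (tensor M C) C)"
  shows "tmap M C id (lmult \<phi>) (tassoc M C C Y) = tmap M C (rmult M \<phi>) id Y"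
proof (rule tensor_hom_ext[OF tensor_abelian _ _ _ Y])
  note cl = compatible_lmult[OF \<phi>, of M]
  note hl = addhom_tmap[OF tensorable_NCC[OF M] tensorable_NC[OF M] cl]
  show "addhom (tensor (tensor M C) C) (tensor M C) (\<lambda>Y. tmap M C id (lmult \<phi>) (tassoc M C C Y))"
    by (rule addhom_comp[OF addhom_tassoc[OF M] hl])
  show "addhom (tensor (tensor M C) C) (tensor M C) (tmap M C (rmult M \<phi>) id)"
    by (rule addhom_tmap[OF tensorable_NC_C[OF M] tensorable_NC[OF M] compatible_rmult[OF \<phi> M]])
  fix x p assume x: "x \<in> carrier (tensor M C)" and p: "p \<in> carrier C"
  have "tmap M C id (lmult \<phi>) (tassoc M C C (tmk (tensor M C) C x p))
      = tmap M C id (lmult \<phi>) (tlift (tensor M (tensor C C)) (assoc_inner M p) x)"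
    using tassoc_tmk[OF M x p] by simp
  also have "\<dots> = tlift (tensor M C) (\<lambda>m n. tmap M C id (lmult \<phi>) (assoc_inner M p m n)) x"
    by (rule tlift_hom[OF tensor_abelian tensor_abelian hl balanced_closed[OF balanced_assoc_inner[OF M p]] x])
  also have "\<dots> = tlift (tensor M C) (\<lambda>m n. tmk M C (ract M m (\<phi> n)) p) x"
  proof (rule tlift_cong[OF tensor_abelian _ _ x])
    show "closed_on M C (tensor M C) (\<lambda>m n. tmap M C id (lmult \<phi>) (assoc_inner M p m n))"
      using addhomD(1)[OF hl] balancedD(2)[OF balanced_assoc_inner[OF M p]] by (simp add: closed_on_def)
    fix m n assume m: "m \<in> carrier M" and n: "n \<in> carrier C"
    show "tmap M C id (lmult \<phi>) (assoc_inner M p m n) = tmk M C (ract M m (\<phi> n)) p"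
      unfolding assoc_inner_def
      using tmap_tmk[OF tensorable_NCC[OF M] tensorable_NC[OF M] cl m tmk_carrier[OF n p]]
        lmult_tmk[OF \<phi> n p] tmk_bal[OF M m p] by simp
  qed
  also have "\<dots> = tmk M C (rmult M \<phi> x) p"
    unfolding rmult_def
    by (rule tlift_hom[OF rmodD(1)[OF M] tensor_abelian addhom_tmk_left[OF M p]
          balanced_closed[OF balanced_rmult[OF \<phi> M]] x, symmetric])
  also have "\<dots> = tmap M C (rmult M \<phi>) id (tmk (tensor M C) C x p)"
    using tmap_tmk[OF tensorable_NC_C[OF M] tensorable_NC[OF M] compatible_rmult[OF \<phi> M] x p] by simp
  finally show "tmap M C id (lmult \<phi>) (tassoc M C C (tmk (tensor M C) C x p))
      = tmap M C (rmult M \<phi>) id (tmk (tensor M C) C x p)" .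
qed

end

section \<open>Corings and comodules\<close>

locale coring_ctx = bimod_ctx C for C :: "('a::ring_1, 'c) bimod" +
  fixes \<Delta> :: "'c \<Rightarrow> ('c \<times> 'c \<Rightarrow> int) set" and \<epsilon> :: "'c \<Rightarrow> 'a"
  assumes coring_C: "coring C \<Delta> \<epsilon>"
begin

text \<open>The coring axioms used below: \<open>\<Delta>\<close> and \<open>\<epsilon>\<close> are bimodule maps, and the left counit law.\<close>

lemma Delta_bihom: "bihom C (tensor C C) \<Delta>" using coring_C by (simp add: coring_def)
lemma eps_bihomA: "bihomA C \<epsilon>" using coring_C by (simp add: coring_def)

lemma counit_left: "c \<in> carrier C \<Longrightarrow> lmult \<epsilon> (\<Delta> c) = c"
  using coring_C by (simp add: coring_def lmult_def)

lemma Delta_closed: "c \<in> carrier C \<Longrightarrow> \<Delta> c \<in> carrier (tensor C C)"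
  using Delta_bihom by (auto simp: bihom_def rhom_def)

lemma compatible_Delta: "compatible N C N (tensor C C) id \<Delta>"
  using Delta_bihom by (intro compatibleI) (auto simp: bihom_def rhom_def)

lemma comoduleD:
  assumes "comodule C \<Delta> \<epsilon> M \<rho>"
  shows "rmod M" "rhom M (tensor M C) \<rho>"
    "\<And>m. m \<in> carrier M \<Longrightarrow> rmult M \<epsilon> (\<rho> m) = m"
    "\<And>m. m \<in> carrier M \<Longrightarrow> tassoc M C C (tmap (tensor M C) C \<rho> id (\<rho> m)) = tmap M (tensor C C) id \<Delta> (\<rho> m)"
  using assms unfolding comodule_def rmult_def by blast+

text \<open>A comodule map \<open>g : M \<rightarrow> N \<otimes> C\<close> is determined by its counit part
  \<open>f = (N \<otimes> \<epsilon>) \<circ> g\<close>: \<open>g = (f \<otimes> C) \<circ> \<rho>\<close>.  This is the cofree-comodule property of \<open>N \<otimes> C\<close>.\<close>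

lemma comod_map_determined:
  assumes Mc: "comodule C \<Delta> \<epsilon> M \<rho>" and N: "rmod N" and g: "comod_map_to C \<Delta> M \<rho> N g"
    and m: "m \<in> carrier M"
  shows "g m = tmap N C (\<lambda>x. rmult N \<epsilon> (g x)) id (\<rho> m)"
proof -
  note M = comoduleD(1)[OF Mc] and rho = comoduleD(2)[OF Mc]
  have gr: "rhom M (tensor N C) g"
    and gco: "tmap N (tensor C C) id \<Delta> (g m) = tassoc N C C (tmap (tensor N C) C g id (\<rho> m))"
    using g m by (auto simp: comod_map_to_def)
  have gm: "g m \<in> carrier (tensor N C)" using rhomD(1)[OF gr m] .
  have rm: "\<rho> m \<in> carrier (tensor M C)" using rhomD(1)[OF rho m] .
  have cg: "compatible M C (tensor N C) C g id" by (rule compatible_rhom[OF gr])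
  note cDe = compatible_comp[OF compatible_Delta compatible_lmult[OF eps_bihomA]]
  have "g m = tmap N C id id (g m)" using tmap_id[OF tensorable_NC[OF N] gm] by simp
  also have "\<dots> = tmap N C (\<lambda>x. id (id x)) (\<lambda>c. lmult \<epsilon> (\<Delta> c)) (g m)"
    by (rule tmap_cong[OF tensorable_NC[OF N] tensorable_NC[OF N] compatible_id[OF tensorable_NC[OF N]] cDe _ _ gm])
      (simp_all add: counit_left)
  also have "\<dots> = tmap N C id (lmult \<epsilon>) (tmap N (tensor C C) id \<Delta> (g m))"
    by (rule tmap_comp[OF tensorable_NC[OF N] tensorable_NCC[OF N] tensorable_NC[OF N] compatible_Delta
          compatible_lmult[OF eps_bihomA] gm, symmetric])
  also have "\<dots> = tmap N C id (lmult \<epsilon>) (tassoc N C C (tmap (tensor N C) C g id (\<rho> m)))"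
    using gco by simp
  also have "\<dots> = tmap N C (rmult N \<epsilon>) id (tmap (tensor N C) C g id (\<rho> m))"
    by (rule rmult_assoc[OF eps_bihomA N tmap_closed[OF tensorable_NC[OF M] tensorable_NC_C[OF N] cg rm]])
  also have "\<dots> = tmap N C (\<lambda>x. rmult N \<epsilon> (g x)) (\<lambda>c. id (id c)) (\<rho> m)"
    by (rule tmap_comp[OF tensorable_NC[OF M] tensorable_NC_C[OF N] tensorable_NC[OF N] cg
          compatible_rmult[OF eps_bihomA N] rm])
  finally show ?thesis by (simp add: id_def)
qed

lemma rhom_tmap_coaction:
  assumes Mc: "comodule C \<Delta> \<epsilon> M \<rho>" and N: "rmod N" and f: "rhom M N f"
  shows "rhom M (tensor N C) (\<lambda>m. tmap N C f id (\<rho> m))"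
proof -
  note M = comoduleD(1)[OF Mc] and rho = comoduleD(2)[OF Mc]
  have cf: "compatible M C N C f id" by (rule compatible_rhom[OF f])
  note ok = tensorable_NC[OF M] tensorable_NC[OF N]
  show ?thesis
  proof (rule rhomI)
    fix m assume m: "m \<in> carrier M"
    show "tmap N C f id (\<rho> m) \<in> carrier (tensor N C)" by (rule tmap_closed[OF ok cf rhomD(1)[OF rho m]])
    show "tmap N C f id (\<rho> (ract M m a)) = ract (tensor N C) (tmap N C f id (\<rho> m)) a" for a
      using rhomD(3)[OF rho m] tmap_ract[OF M N cf rhomD(1)[OF rho m]] by simp
    fix m' assume m': "m' \<in> carrier M"
    show "tmap N C f id (\<rho> (m \<oplus>\<^bsub>M\<^esub> m')) = tmap N C f id (\<rho> m) \<oplus>\<^bsub>tensor N C\<^esub> tmap N C f id (\<rho> m')"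
      using rhomD(2)[OF rho m m'] addhomD(2)[OF addhom_tmap[OF ok cf] rhomD(1)[OF rho m] rhomD(1)[OF rho m']]
      by simp
  qed
qed

lemma comod_map_tmap_coaction:
  assumes Mc: "comodule C \<Delta> \<epsilon> M \<rho>" and N: "rmod N" and f: "rhom M N f"
  shows "comod_map_to C \<Delta> M \<rho> N (\<lambda>m. tmap N C f id (\<rho> m))"
  unfolding comod_map_to_def
proof (intro conjI ballI)
  note M = comoduleD(1)[OF Mc] and rho = comoduleD(2)[OF Mc]
  let ?g = "\<lambda>m. tmap N C f id (\<rho> m)"
  show "rhom M (tensor N C) ?g" by (rule rhom_tmap_coaction[OF Mc N f])
  fix m assume m: "m \<in> carrier M"
  have rm: "\<rho> m \<in> carrier (tensor M C)" using rhomD(1)[OF rho m] .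
  have cf: "compatible M C N C f id" by (rule compatible_rhom[OF f])
  have crho: "compatible M C (tensor M C) C \<rho> id" by (rule compatible_rhom[OF rho])
  have cCC: "compatible M (tensor C C) N (tensor C C) f id" by (rule compatible_rhom_CC[OF f])
  have "tmap N (tensor C C) id \<Delta> (?g m) = tmap N (tensor C C) (\<lambda>x. id (f x)) (\<lambda>c. \<Delta> (id c)) (\<rho> m)"
    by (rule tmap_comp[OF tensorable_NC[OF M] tensorable_NC[OF N] tensorable_NCC[OF N] cf compatible_Delta rm])
  also have "\<dots> = tmap N (tensor C C) (\<lambda>x. f (id x)) (\<lambda>c. id (\<Delta> c)) (\<rho> m)" by simp
  also have "\<dots> = tmap N (tensor C C) f id (tmap M (tensor C C) id \<Delta> (\<rho> m))"
    by (rule tmap_comp[OF tensorable_NC[OF M] tensorable_NCC[OF M] tensorable_NCC[OF N] compatible_Delta cCC rm,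
          symmetric])
  also have "\<dots> = tmap N (tensor C C) f id (tassoc M C C (tmap (tensor M C) C \<rho> id (\<rho> m)))"
    using comoduleD(4)[OF Mc m] by simp
  also have "\<dots> = tassoc N C C (tmap (tensor N C) C (tmap N C f id) id (tmap (tensor M C) C \<rho> id (\<rho> m)))"
    by (rule tassoc_natural[OF M N cf tmap_closed[OF tensorable_NC[OF M] tensorable_NC_C[OF M] crho rm], symmetric])
  also have "tmap (tensor N C) C (tmap N C f id) id (tmap (tensor M C) C \<rho> id (\<rho> m))
      = tmap (tensor N C) C ?g (\<lambda>c. id (id c)) (\<rho> m)"
    by (rule tmap_comp[OF tensorable_NC[OF M] tensorable_NC_C[OF M] tensorable_NC_C[OF N] crho
          compatible_tmap[OF M N cf] rm])
  finally show "tmap N (tensor C C) id \<Delta> (?g m) = tassoc N C C (tmap (tensor N C) C ?g id (\<rho> m))"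
    by (simp add: id_def)
qed

end

section \<open>Coseparable corings and the map \<open>\<kappa>\<^sub>M\<close>\<close>

locale coseparable_ctx = coring_ctx C \<Delta> \<epsilon> for C :: "('a::ring_1, 'c) bimod" and \<Delta> \<epsilon> +
  fixes \<delta> :: "('c \<times> 'c \<Rightarrow> int) set \<Rightarrow> 'a" and e :: 'c
  assumes cosep_C: "coseparable C \<Delta> \<epsilon> \<delta>" and e_coinv: "e \<in> coinv C"
begin

lemma delta_bihomA: "bihomA (tensor C C) \<delta>" using cosep_C by (simp add: coseparable_def)
lemma e_closed: "e \<in> carrier C" using e_coinv by (simp add: coinv_def)
lemma e_central: "lact C a e = ract C e a" using e_coinv by (simp add: coinv_def)

text \<open>The A-valued map \<open>c \<mapsto> \<delta>(e \<otimes> c)\<close>; it is (A,A)-linear because e is central.\<close>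

definition delta_e :: "'c \<Rightarrow> 'a" where
  "delta_e c = \<delta> (tmk C C e c)"

lemma delta_tmk_add_left: "x \<in> carrier C \<Longrightarrow> x' \<in> carrier C \<Longrightarrow> c \<in> carrier C \<Longrightarrow>
    \<delta> (tmk C C (x \<oplus>\<^bsub>C\<^esub> x') c) = \<delta> (tmk C C x c) + \<delta> (tmk C C x' c)"
  using balancedD(3)[OF balanced_tmk_CC] bihomAD(1)[OF delta_bihomA tmk_carrier tmk_carrier] by simp

lemma delta_lact_left: "x \<in> carrier C \<Longrightarrow> c \<in> carrier C \<Longrightarrow> \<delta> (tmk C C (lact C a x) c) = a * \<delta> (tmk C C x c)"
  using lact_CC_tmk bihomAD(2)[OF delta_bihomA tmk_carrier] by simp

lemma bihomA_delta_e: "bihomA C delta_e"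
  unfolding bihomA_def delta_e_def
proof (intro conjI ballI allI)
  fix c assume c: "c \<in> carrier C"
  fix c' assume c': "c' \<in> carrier C"
  show "\<delta> (tmk C C e (c \<oplus>\<^bsub>C\<^esub> c')) = \<delta> (tmk C C e c) + \<delta> (tmk C C e c')"
    using balancedD(4)[OF balanced_tmk_CC e_closed c c'] bihomAD(1)[OF delta_bihomA tmk_carrier tmk_carrier]
      e_closed c c' by simp
next
  fix c a assume c: "c \<in> carrier C"
  have "tmk C C e (lact C a c) = tmk C C (lact C a e) c"
    using balancedD(5)[OF balanced_tmk_CC e_closed c] by (simp add: e_central)
  then show "\<delta> (tmk C C e (lact C a c)) = a * \<delta> (tmk C C e c)" using delta_lact_left[OF e_closed c] by simp
  show "\<delta> (tmk C C e (ract C c a)) = \<delta> (tmk C C e c) * a"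
    using ract_tmk[OF rmod_C e_closed c] bihomAD(3)[OF delta_bihomA tmk_carrier[OF e_closed c]] by simp
qed

lemma kappa_eq_rmult: "kappa C \<delta> e M \<rho> m = rmult M delta_e (\<rho> m)"
  by (simp add: kappa_def rmult_def delta_e_def)

text \<open>The C-component of \<open>r\<^sub>N\<close>: \<open>r\<^sub>N = N \<otimes> rcomp\<close> with \<open>rcomp c = \<Sum> e\<^sub>1 \<delta>(e\<^sub>2 \<otimes> c)\<close>.
  By the cointegral identity, \<open>rcomp c = \<Sum> \<delta>(e \<otimes> c\<^sub>1) c\<^sub>2 = lmult delta_e (\<Delta> c)\<close>.\<close>

definition rcomp :: "'c \<Rightarrow> 'c" where
  "rcomp c = tlift C (\<lambda>x y. ract C x (\<delta> (tmk C C y c))) (\<Delta> e)"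

lemma rcomp_eq: "c \<in> carrier C \<Longrightarrow> rcomp c = lmult delta_e (\<Delta> c)"
  using cosep_C e_closed by (simp add: coseparable_def rcomp_def lmult_def delta_e_def)

lemma compatible_rcomp: "compatible N C N C id rcomp"
proof -
  have "compatible N C N C (\<lambda>x. id (id x)) (\<lambda>c. lmult delta_e (\<Delta> c))"
    by (rule compatible_comp[OF compatible_Delta compatible_lmult[OF bihomA_delta_e]])
  moreover have "\<And>c a. c \<in> carrier C \<Longrightarrow> lact C a c \<in> carrier C" using lmodD(2)[OF lmod_C] .
  moreover have "\<And>c c'. c \<in> carrier C \<Longrightarrow> c' \<in> carrier C \<Longrightarrow> c \<oplus>\<^bsub>C\<^esub> c' \<in> carrier C"
    using abelian_C by (simp add: abelian_groupE(1))
  ultimately show ?thesis unfolding compatible_def by (simp add: rcomp_eq)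
qed

text \<open>\<open>\<epsilon> \<circ> rcomp = delta_e\<close>: both equal \<open>\<Sum> \<epsilon>(e\<^sub>1) \<delta>(e\<^sub>2 \<otimes> c)\<close> by the counit law for e.\<close>

lemma eps_rcomp:
  assumes c: "c \<in> carrier C"
  shows "\<epsilon> (rcomp c) = delta_e c"
proof -
  have cl1: "closed_on C C C (\<lambda>x y. ract C x (\<delta> (tmk C C y c)))"
    using rmodD(2)[OF rmod_C] by (simp add: closed_on_def)
  have addhom_eps: "addhom C scalars \<epsilon>"
    using bihomAD(1)[OF eps_bihomA] by (auto intro!: addhomI)
  have "\<epsilon> (rcomp c) = tlift scalars (\<lambda>x y. \<epsilon> (ract C x (\<delta> (tmk C C y c)))) (\<Delta> e)"
    unfolding rcomp_def by (rule tlift_hom[OF abelian_C scalars_abelian addhom_eps cl1 Delta_closed[OF e_closed]])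
  also have "\<dots> = tlift scalars (\<lambda>x y. \<epsilon> x * \<delta> (tmk C C y c)) (\<Delta> e)"
    by (rule tlift_cong[OF scalars_abelian _ _ Delta_closed[OF e_closed]])
      (auto simp: closed_on_def bihomAD(3)[OF eps_bihomA])
  finally have 1: "\<epsilon> (rcomp c) = tlift scalars (\<lambda>x y. \<epsilon> x * \<delta> (tmk C C y c)) (\<Delta> e)" .
  have F: "addhom C scalars (\<lambda>z. \<delta> (tmk C C z c))"
    using delta_tmk_add_left[OF _ _ c] by (intro addhomI) auto
  have "delta_e c = \<delta> (tmk C C (lmult \<epsilon> (\<Delta> e)) c)" using counit_left[OF e_closed] by (simp add: delta_e_def)
  also have "\<dots> = tlift scalars (\<lambda>x y. \<delta> (tmk C C (lact C (\<epsilon> x) y) c)) (\<Delta> e)"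
    unfolding lmult_def
    by (rule tlift_hom[OF abelian_C scalars_abelian F balanced_closed[OF balanced_lmult[OF eps_bihomA]]
          Delta_closed[OF e_closed]])
  also have "\<dots> = tlift scalars (\<lambda>x y. \<epsilon> x * \<delta> (tmk C C y c)) (\<Delta> e)"
    by (rule tlift_cong[OF scalars_abelian _ _ Delta_closed[OF e_closed]])
      (auto simp: closed_on_def delta_lact_left[OF _ c])
  finally show ?thesis using 1 by simp
qed

lemma rmap_tmap:
  assumes N: "rmod N" and X: "X \<in> carrier (tensor N C)"
  shows "rmap C \<Delta> \<delta> e N X = tmap N C id rcomp X"
  using tmap_tlift[OF tensorable_NC[OF N] tensorable_NC[OF N] compatible_rcomp X] by (simp add: rmap_def rcomp_def)

lemma counit_rmap:
  assumes N: "rmod N" and X: "X \<in> carrier (tensor N C)"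
  shows "rmult N \<epsilon> (rmap C \<Delta> \<delta> e N X) = rmult N delta_e X"
proof -
  have "rmult N \<epsilon> (rmap C \<Delta> \<delta> e N X) = tlift N (\<lambda>x c. ract N x (\<epsilon> (rcomp c))) X"
    unfolding rmap_tmap[OF N X] by (rule rmult_tmap_right[OF eps_bihomA N compatible_rcomp X])
  also have "\<dots> = rmult N delta_e X"
    unfolding rmult_def
    by (rule tlift_cong[OF rmodD(1)[OF N] _ _ X]) (auto simp: closed_on_def eps_rcomp rmodD(2)[OF N])
  finally show ?thesis .
qed

text \<open>The central computation: on the image of the coaction,
  \<open>(M \<otimes> rcomp) \<circ> \<rho> = (\<kappa>\<^sub>M \<otimes> C) \<circ> \<rho>\<close>.  It combines \<open>rcomp = lmult delta_e \<circ> \<Delta>\<close>,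
  coassociativity of \<open>\<rho>\<close>, and \<open>rmult_assoc\<close>.\<close>

lemma rcomp_coaction:
  assumes Mc: "comodule C \<Delta> \<epsilon> M \<rho>" and m: "m \<in> carrier M"
  shows "tmap M C id rcomp (\<rho> m) = tmap M C (\<lambda>x. rmult M delta_e (\<rho> x)) id (\<rho> m)"
proof -
  note M = comoduleD(1)[OF Mc] and rho = comoduleD(2)[OF Mc]
  have rm: "\<rho> m \<in> carrier (tensor M C)" using rhomD(1)[OF rho m] .
  have crho: "compatible M C (tensor M C) C \<rho> id" by (rule compatible_rhom[OF rho])
  note cl = compatible_lmult[OF bihomA_delta_e]
  have "tmap M C id rcomp (\<rho> m) = tmap M C (\<lambda>x. id (id x)) (\<lambda>c. lmult delta_e (\<Delta> c)) (\<rho> m)"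
    by (rule tmap_cong[OF tensorable_NC[OF M] tensorable_NC[OF M] compatible_rcomp
          compatible_comp[OF compatible_Delta cl] _ _ rm]) (simp_all add: rcomp_eq)
  also have "\<dots> = tmap M C id (lmult delta_e) (tmap M (tensor C C) id \<Delta> (\<rho> m))"
    by (rule tmap_comp[OF tensorable_NC[OF M] tensorable_NCC[OF M] tensorable_NC[OF M] compatible_Delta cl rm,
          symmetric])
  also have "\<dots> = tmap M C id (lmult delta_e) (tassoc M C C (tmap (tensor M C) C \<rho> id (\<rho> m)))"
    using comoduleD(4)[OF Mc m] by simp
  also have "\<dots> = tmap M C (rmult M delta_e) id (tmap (tensor M C) C \<rho> id (\<rho> m))"
    by (rule rmult_assoc[OF bihomA_delta_e M tmap_closed[OF tensorable_NC[OF M] tensorable_NC_C[OF M] crho rm]])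
  also have "\<dots> = tmap M C (\<lambda>x. rmult M delta_e (\<rho> x)) (\<lambda>c. id (id c)) (\<rho> m)"
    by (rule tmap_comp[OF tensorable_NC[OF M] tensorable_NC_C[OF M] tensorable_NC[OF M] crho
          compatible_rmult[OF bihomA_delta_e M] rm])
  finally show ?thesis by (simp add: id_def)
qed

lemma rmap_tmap_coaction:
  assumes Mc: "comodule C \<Delta> \<epsilon> M \<rho>" and N: "rmod N" and f: "rhom M N f" and m: "m \<in> carrier M"
  shows "rmap C \<Delta> \<delta> e N (tmap N C f id (\<rho> m)) = tmap N C (\<lambda>x. f (kappa C \<delta> e M \<rho> x)) id (\<rho> m)"
proof -
  note M = comoduleD(1)[OF Mc] and rho = comoduleD(2)[OF Mc]
  have rm: "\<rho> m \<in> carrier (tensor M C)" using rhomD(1)[OF rho m] .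
  have cf: "compatible M C N C f id" by (rule compatible_rhom[OF f])
  have ck: "compatible M C M C (\<lambda>x. rmult M delta_e (\<rho> x)) id"
    by (rule compatible_rhom[OF rhom_rmult_comp[OF bihomA_delta_e M M rho]])
  note ok = tensorable_NC[OF M] tensorable_NC[OF N]
  have "rmap C \<Delta> \<delta> e N (tmap N C f id (\<rho> m)) = tmap N C id rcomp (tmap N C f id (\<rho> m))"
    by (rule rmap_tmap[OF N tmap_closed[OF ok cf rm]])
  also have "\<dots> = tmap N C (\<lambda>x. id (f x)) (\<lambda>c. rcomp (id c)) (\<rho> m)"
    by (rule tmap_comp[OF ok tensorable_NC[OF N] cf compatible_rcomp rm])
  also have "\<dots> = tmap N C (\<lambda>x. f (id x)) (\<lambda>c. id (rcomp c)) (\<rho> m)" by simp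
  also have "\<dots> = tmap N C f id (tmap M C id rcomp (\<rho> m))"
    by (rule tmap_comp[OF tensorable_NC[OF M] ok compatible_rcomp cf rm, symmetric])
  also have "\<dots> = tmap N C f id (tmap M C (\<lambda>x. rmult M delta_e (\<rho> x)) id (\<rho> m))"
    using rcomp_coaction[OF Mc m] by simp
  also have "\<dots> = tmap N C (\<lambda>x. f (rmult M delta_e (\<rho> x))) (\<lambda>c. id (id c)) (\<rho> m)"
    by (rule tmap_comp[OF tensorable_NC[OF M] ok ck cf rm])
  finally show ?thesis by (simp add: id_def kappa_eq_rmult)
qed

section \<open>Formal smoothness\<close>

text \<open>If M is formally smooth, lifting the identity comodule map \<open>\<rho> : M \<rightarrow> M \<otimes> C\<close>
  through \<open>r\<^sub>M\<close> gives g with \<open>r\<^sub>M \<circ> g = \<rho>\<close>; then \<open>(M \<otimes> \<epsilon>) \<circ> g\<close> is a left inverse of \<open>\<kappa>\<^sub>M\<close>.\<close>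

lemma smooth_imp_left_inverse:
  fixes M :: "('a, 'm) bimod"
  assumes Mc: "comodule C \<Delta> \<epsilon> M \<rho>" and fs: "formally_smooth TYPE('m) C \<Delta> \<delta> e M \<rho>"
  shows "\<exists>\<phi>. rhom M M \<phi> \<and> (\<forall>m\<in>carrier M. \<phi> (kappa C \<delta> e M \<rho> m) = m)"
proof -
  note M = comoduleD(1)[OF Mc] and rho = comoduleD(2)[OF Mc]
  have "comod_map_to C \<Delta> M \<rho> M \<rho>" using rho comoduleD(4)[OF Mc] by (simp add: comod_map_to_def)
  then obtain g where g: "comod_map_to C \<Delta> M \<rho> M g"
    and gr: "\<And>m. m \<in> carrier M \<Longrightarrow> rmap C \<Delta> \<delta> e M (g m) = \<rho> m"
    using fs M unfolding formally_smooth_def by blast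
  have grh: "rhom M (tensor M C) g" using g by (simp add: comod_map_to_def)
  let ?\<phi> = "\<lambda>x. rmult M \<epsilon> (g x)"
  have ph: "rhom M M ?\<phi>" by (rule rhom_rmult_comp[OF eps_bihomA M M grh])
  have "?\<phi> (kappa C \<delta> e M \<rho> m) = m" if m: "m \<in> carrier M" for m
  proof -
    have rm: "\<rho> m \<in> carrier (tensor M C)" using rhomD(1)[OF rho m] .
    have "?\<phi> (kappa C \<delta> e M \<rho> m) = rmult M delta_e (tmap M C ?\<phi> id (\<rho> m))"
      using rmult_natural[OF bihomA_delta_e M M ph rm] by (simp add: kappa_eq_rmult)
    also have "\<dots> = rmult M delta_e (g m)" using comod_map_determined[OF Mc M g m] by simp
    also have "\<dots> = rmult M \<epsilon> (rmap C \<Delta> \<delta> e M (g m))" using counit_rmap[OF M rhomD(1)[OF grh m]] by simp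
    also have "\<dots> = m" using gr[OF m] comoduleD(3)[OF Mc m] by simp
    finally show ?thesis .
  qed
  then show ?thesis using ph by blast
qed

text \<open>Conversely, given a left inverse \<open>\<phi>\<close> of \<open>\<kappa>\<^sub>M\<close> and a comodule map \<open>h : M \<rightarrow> N \<otimes> C\<close>
  with counit part f, the comodule map \<open>((f \<circ> \<phi>) \<otimes> C) \<circ> \<rho>\<close> lifts h through \<open>r\<^sub>N\<close>.\<close>

lemma left_inverse_imp_lift:
  assumes Mc: "comodule C \<Delta> \<epsilon> M \<rho>" and ph: "rhom M M \<phi>"
    and inv: "\<forall>m\<in>carrier M. \<phi> (kappa C \<delta> e M \<rho> m) = m"
    and N: "rmod N" and h: "comod_map_to C \<Delta> M \<rho> N h"
  shows "\<exists>g. comod_map_to C \<Delta> M \<rho> N g \<and> (\<forall>m\<in>carrier M. rmap C \<Delta> \<delta> e N (g m) = h m)"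
proof -
  note M = comoduleD(1)[OF Mc]
  let ?f = "\<lambda>x. rmult N \<epsilon> (h x)"
  have fr: "rhom M N ?f" using h rhom_rmult_comp[OF eps_bihomA M N] by (simp add: comod_map_to_def)
  have f'r: "rhom M N (\<lambda>x. ?f (\<phi> x))" by (rule rhom_comp[OF ph fr])
  have kr: "rhom M M (kappa C \<delta> e M \<rho>)"
    using rhom_rmult_comp[OF bihomA_delta_e M M comoduleD(2)[OF Mc]] unfolding kappa_eq_rmult[abs_def] .
  let ?g = "\<lambda>m. tmap N C (\<lambda>x. ?f (\<phi> x)) id (\<rho> m)"
  have "rmap C \<Delta> \<delta> e N (?g m) = h m" if m: "m \<in> carrier M" for m
  proof -
    have rm: "\<rho> m \<in> carrier (tensor M C)" using rhomD(1)[OF comoduleD(2)[OF Mc] m] .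
    have ck: "compatible M C N C (\<lambda>x. ?f (\<phi> (kappa C \<delta> e M \<rho> x))) id"
      by (rule compatible_rhom[OF rhom_comp[OF kr f'r]])
    have "rmap C \<Delta> \<delta> e N (?g m) = tmap N C (\<lambda>x. ?f (\<phi> (kappa C \<delta> e M \<rho> x))) id (\<rho> m)"
      by (rule rmap_tmap_coaction[OF Mc N f'r m])
    also have "\<dots> = tmap N C ?f id (\<rho> m)"
      by (rule tmap_cong[OF tensorable_NC[OF M] tensorable_NC[OF N] ck compatible_rhom[OF fr] _ _ rm])
        (simp_all add: inv)
    also have "\<dots> = h m" using comod_map_determined[OF Mc N h m] by simp
    finally show ?thesis .
  qed
  then show ?thesis using comod_map_tmap_coaction[OF Mc N f'r] by blast
qed

text \<open>In particular a left inverse of \<open>\<kappa>\<^sub>M\<close> makes M formally smooth with respect to test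
  modules of any type.\<close>

lemma left_inverse_imp_smooth:
  assumes Mc: "comodule C \<Delta> \<epsilon> M \<rho>"
    and ex: "\<exists>\<phi>. rhom M M \<phi> \<and> (\<forall>m\<in>carrier M. \<phi> (kappa C \<delta> e M \<rho> m) = m)"
  shows "formally_smooth TYPE('n) C \<Delta> \<delta> e M \<rho>"
  unfolding formally_smooth_def using left_inverse_imp_lift[OF Mc] ex by blast

end

lemma coseparable_ctxI:
  assumes "coseparable C \<Delta> \<epsilon> \<delta>" and "e \<in> coinv C"
  shows "coseparable_ctx C \<Delta> \<epsilon> \<delta> e"
proof -
  have cor: "coring C \<Delta> \<epsilon>" using assms(1) by (simp add: coseparable_def)
  have "bimodule C" using cor by (simp add: coring_def)
  then show ?thesis
    using assms cor by (intro coseparable_ctx.intro coring_ctx.intro bimod_ctx.intro coring_ctx_axioms.intro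
        coseparable_ctx_axioms.intro)
qed

theorem proposition4p5:
  fixes C :: "('a::ring_1, 'c) bimod"
    and \<Delta> :: "'c \<Rightarrow> ('c \<times> 'c \<Rightarrow> int) set"
    and \<epsilon> :: "'c \<Rightarrow> 'a"
    and \<delta> :: "('c \<times> 'c \<Rightarrow> int) set \<Rightarrow> 'a"
    and e :: 'c
    and M :: "('a, 'm) bimod"
    and \<rho> :: "'m \<Rightarrow> ('m \<times> 'c \<Rightarrow> int) set"
  assumes "coseparable C \<Delta> \<epsilon> \<delta>"
    and "e \<in> coinv C"
    and "comodule C \<Delta> \<epsilon> M \<rho>"
  shows "(formally_smooth TYPE('m) C \<Delta> \<delta> e M \<rho> \<longleftrightarrow>
            (\<exists>\<phi>. rhom M M \<phi> \<and> (\<forall>m\<in>carrier M. \<phi> (kappa C \<delta> e M \<rho> m) = m)))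
       \<and> ((\<exists>\<phi>. rhom M M \<phi> \<and> (\<forall>m\<in>carrier M. \<phi> (kappa C \<delta> e M \<rho> m) = m))
            \<longrightarrow> formally_smooth TYPE('n) C \<Delta> \<delta> e M \<rho>)"
proof -
  interpret coseparable_ctx C \<Delta> \<epsilon> \<delta> e by (rule coseparable_ctxI) (fact assms(1), fact assms(2))
  show ?thesis
    using smooth_imp_left_inverse[OF assms(3)] left_inverse_imp_smooth[OF assms(3), where 'n='m]
      left_inverse_imp_smooth[OF assms(3), where 'n='n] by blast
qed

end
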